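(* Let $k$ be a field. Every finitely presented right $\mathrm{RCFM}(k)$-module has projective dimension at most $1$.
   Context: $\mathrm{RCFM}(k)$ is the $k$-algebra of $\mathbb{N}_0\times\mathbb{N}_0$ matrices over $k$ with finitely many nonzero entries in each row and each column. *)

theory Defs
  imports "HOL-Algebra.Ring"
begin

definition rcfm_carrier :: "(nat \<Rightarrow> nat \<Rightarrow> 'k::field) set" where
  "rcfm_carrier = {A. (\<forall>i. finite {j. A i j \<noteq> 0}) \<and> (\<forall>j. finite {i. A i j \<noteq> 0})}"

definition RCFM :: "(nat \<Rightarrow> nat \<Rightarrow> 'k::field) ring" where
  "RCFM = \<lparr> carrier = rcfm_carrier,
            mult = (\<lambda>A B i j. \<Sum>l\<in>{l. A i l \<noteq> 0}. A i l * B l j),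
            one = (\<lambda>i j. if i = j then 1 else 0),
            zero = (\<lambda>i j. 0),
            add = (\<lambda>A B i j. A i j + B i j) \<rparr>"

text \<open>A right module structure: additive group data (the mult/one fields of the
underlying ring record are unused) plus a right action  rsmult M x r  =  x . r.\<close>

record ('a, 'r) rmodule = "'a ring" +
  rsmult :: "'a \<Rightarrow> 'r \<Rightarrow> 'a"

definition right_module :: "('r, 'c) ring_scheme \<Rightarrow> ('a, 'r, 'd) rmodule_scheme \<Rightarrow> bool" where
  "right_module R M \<longleftrightarrow>
     abelian_group M \<and>
     (\<forall>x\<in>carrier M. \<forall>r\<in>carrier R. rsmult M x r \<in> carrier M) \<and>
     (\<forall>x\<in>carrier M. \<forall>y\<in>carrier M. \<forall>r\<in>carrier R.
        rsmult M (x \<oplus>\<^bsub>M\<^esub> y) r = rsmult M x r \<oplus>\<^bsub>M\<^esub> rsmult M y r) \<and>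
     (\<forall>x\<in>carrier M. \<forall>r\<in>carrier R. \<forall>s\<in>carrier R.
        rsmult M x (r \<oplus>\<^bsub>R\<^esub> s) = rsmult M x r \<oplus>\<^bsub>M\<^esub> rsmult M x s) \<and>
     (\<forall>x\<in>carrier M. \<forall>r\<in>carrier R. \<forall>s\<in>carrier R.
        rsmult M x (r \<otimes>\<^bsub>R\<^esub> s) = rsmult M (rsmult M x r) s) \<and>
     (\<forall>x\<in>carrier M. rsmult M x \<one>\<^bsub>R\<^esub> = x)"

definition rhom :: "('r, 'c) ring_scheme \<Rightarrow> ('a, 'r, 'd) rmodule_scheme
                    \<Rightarrow> ('b, 'r, 'e) rmodule_scheme \<Rightarrow> ('a \<Rightarrow> 'b) set" where
  "rhom R A B = {f. f \<in> carrier A \<rightarrow> carrier B \<and>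
     (\<forall>x\<in>carrier A. \<forall>y\<in>carrier A. f (x \<oplus>\<^bsub>A\<^esub> y) = f x \<oplus>\<^bsub>B\<^esub> f y) \<and>
     (\<forall>x\<in>carrier A. \<forall>r\<in>carrier R. f (rsmult A x r) = rsmult B (f x) r)}"

definition rkernel :: "('a, 'r, 'd) rmodule_scheme \<Rightarrow> ('b, 'r, 'e) rmodule_scheme
                       \<Rightarrow> ('a \<Rightarrow> 'b) \<Rightarrow> 'a set" where
  "rkernel A B f = {x \<in> carrier A. f x = \<zero>\<^bsub>B\<^esub>}"

definition free_rmod :: "('r, 'c) ring_scheme \<Rightarrow> nat \<Rightarrow> (nat \<Rightarrow> 'r, 'r) rmodule" where
  "free_rmod R n = \<lparr> carrier = {v. (\<forall>i<n. v i \<in> carrier R) \<and> (\<forall>i\<ge>n. v i = \<zero>\<^bsub>R\<^esub>)},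
                     mult = (\<lambda>_ _. undefined), one = undefined,
                     zero = (\<lambda>i. \<zero>\<^bsub>R\<^esub>),
                     add = (\<lambda>v w i. if i < n then v i \<oplus>\<^bsub>R\<^esub> w i else \<zero>\<^bsub>R\<^esub>),
                     rsmult = (\<lambda>v r i. if i < n then v i \<otimes>\<^bsub>R\<^esub> r else \<zero>\<^bsub>R\<^esub>) \<rparr>"

definition finitely_presented :: "('r, 'c) ring_scheme \<Rightarrow> ('a, 'r, 'd) rmodule_scheme \<Rightarrow> bool" where
  "finitely_presented R M \<longleftrightarrow>
     (\<exists>n m f g. f \<in> rhom R (free_rmod R m) (free_rmod R n) \<and>
                g \<in> rhom R (free_rmod R n) M \<and>
                g ` carrier (free_rmod R n) = carrier M \<and>
                f ` carrier (free_rmod R m) = rkernel (free_rmod R n) M g)"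

text \<open>Projective: lifting property along surjective homomorphisms, tested against
all right modules whose carrier lives in the type 'b (a parameter, since HOL
cannot quantify over types inside a formula).\<close>

definition projective :: "('r, 'c) ring_scheme \<Rightarrow> ('p, 'r, 'd) rmodule_scheme \<Rightarrow> 'b itself \<Rightarrow> bool" where
  "projective R P (_ :: 'b itself) \<longleftrightarrow>
     (\<forall>(A :: ('b, 'r) rmodule) (B :: ('b, 'r) rmodule) g f.
        right_module R A \<and> right_module R B \<and> g \<in> rhom R A B \<and> g ` carrier A = carrier B \<and>
        f \<in> rhom R P B \<longrightarrow>
        (\<exists>h\<in>rhom R P A. \<forall>x\<in>carrier P. g (h x) = f x))"

definition proj_dim_le1 :: "('r, 'c) ring_scheme \<Rightarrow> ('a, 'r, 'd) rmodule_scheme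
                            \<Rightarrow> 'p itself \<Rightarrow> 'b itself \<Rightarrow> bool" where
  "proj_dim_le1 R M (_ :: 'p itself) (tb :: 'b itself) \<longleftrightarrow>
     (\<exists>(P0 :: ('p, 'r) rmodule) (P1 :: ('p, 'r) rmodule) i d.
        right_module R P0 \<and> right_module R P1 \<and>
        projective R P0 tb \<and> projective R P1 tb \<and>
        i \<in> rhom R P1 P0 \<and> inj_on i (carrier P1) \<and>
        d \<in> rhom R P0 M \<and> d ` carrier P0 = carrier M \<and>
        i ` carrier P1 = rkernel P0 M d)"

end

theory Submission
  imports Defs "HOL-Library.Countable" "HOL-Algebra.AbelCoset"
begin

(* Given a presentation RCFM^m --f--> RCFM^n --> M --> 0, it suffices that ker f is a direct
   summand of RCFM^m: f then maps the complementary summand, a projective module, isomorphically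
   onto im f, the kernel of RCFM^n --> M.

   An element v of RCFM^m is a row- and column-finite matrix with rows indexed by {..<m} x N,
   and f v = 0 iff every column of v lies in the space K of finitely supported vectors killed
   by countably many finitely supported functionals (the rows of the matrix of f).  A
   back-and-forth construction yields biorthogonal sequences (a_r, b_r), each with a_r in K
   or b_r orthogonal to K, whose spans both contain every standard basis vector.  The
   projection w |-> sum of <w, b_r> a_r over the r with a_r in K then maps finitely supported
   vectors onto K through a row-finite matrix, so it acts on RCFM^m column by column, and its
   complement is an idempotent endomorphism of RCFM^m with kernel ker f. *)

section \<open>Finitely supported vectors\<close>

definition finsupp :: "('i \<Rightarrow> 'k::zero) \<Rightarrow> bool" where
  "finsupp x \<longleftrightarrow> finite {t. x t \<noteq> 0}"

definition dot :: "('i \<Rightarrow> 'k::comm_ring) \<Rightarrow> ('i \<Rightarrow> 'k) \<Rightarrow> 'k" where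
  "dot x y = (\<Sum>t | x t \<noteq> 0. x t * y t)"

definition delta :: "'i \<Rightarrow> 'i \<Rightarrow> 'k::{zero,one}" where
  "delta s = (\<lambda>t. if t = s then 1 else 0)"

lemma finsupp_zero [simp]: "finsupp (\<lambda>t. 0)"
  by (simp add: finsupp_def)

lemma finsupp_add: "finsupp x \<Longrightarrow> finsupp y \<Longrightarrow> finsupp (\<lambda>t. x t + (y t :: 'k::monoid_add))"
  unfolding finsupp_def by (rule finite_subset[of _ "{t. x t \<noteq> 0} \<union> {t. y t \<noteq> 0}"]) auto

lemma finsupp_diff: "finsupp x \<Longrightarrow> finsupp y \<Longrightarrow> finsupp (\<lambda>t. x t - (y t :: 'k::group_add))"
  unfolding finsupp_def by (rule finite_subset[of _ "{t. x t \<noteq> 0} \<union> {t. y t \<noteq> 0}"]) auto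

lemma finsupp_scale: "finsupp x \<Longrightarrow> finsupp (\<lambda>t. c * (x t :: 'k::mult_zero))"
  unfolding finsupp_def by (rule finite_subset[of _ "{t. x t \<noteq> 0}"]) auto

lemma finsupp_delta [simp]: "finsupp (delta s :: 'i \<Rightarrow> 'k::zero_neq_one)"
  unfolding finsupp_def delta_def by (rule finite_subset[of _ "{s}"]) auto

lemma finsupp_sum:
  "(\<And>r. r < n \<Longrightarrow> finsupp (x r)) \<Longrightarrow> finsupp (\<lambda>t. \<Sum>r<(n::nat). x r t :: 'k::comm_monoid_add)"
  by (induction n) (simp_all add: finsupp_add)

lemma finsupp_lincomb:
  "(\<And>r. r < n \<Longrightarrow> finsupp (x r)) \<Longrightarrow> finsupp (\<lambda>t. \<Sum>r<(n::nat). c r * x r t :: 'k::comm_ring)"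
  by (intro finsupp_sum finsupp_scale)

lemma dot_eq_sum:
  assumes "finsupp x" "finite S" "\<And>t. t \<notin> S \<Longrightarrow> x t * y t = 0"
  shows "dot x y = (\<Sum>t\<in>S. x t * y t)"
proof -
  have fin: "finite {t. x t \<noteq> 0}"
    using assms(1) by (simp add: finsupp_def)
  have "dot x y = (\<Sum>t\<in>{t. x t \<noteq> 0} \<union> S. x t * y t)"
    unfolding dot_def by (rule sum.mono_neutral_left) (use fin assms(2) in auto)
  also have "\<dots> = (\<Sum>t\<in>S. x t * y t)"
    by (rule sum.mono_neutral_right) (use fin assms in auto)
  finally show ?thesis .
qed

lemma dot_eq_sum_left:
  "finsupp x \<Longrightarrow> finite S \<Longrightarrow> {t. x t \<noteq> 0} \<subseteq> S \<Longrightarrow> dot x y = (\<Sum>t\<in>S. x t * y t)"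
proof (rule dot_eq_sum)
  fix t assume "{t. x t \<noteq> 0} \<subseteq> S" "t \<notin> S"
  then have "x t = 0" by blast
  then show "x t * y t = 0" by simp
qed

lemma dot_eq_sum_right:
  "finsupp x \<Longrightarrow> finite S \<Longrightarrow> {t. y t \<noteq> 0} \<subseteq> S \<Longrightarrow> dot x y = (\<Sum>t\<in>S. x t * y t)"
proof (rule dot_eq_sum)
  fix t assume "{t. y t \<noteq> 0} \<subseteq> S" "t \<notin> S"
  then have "y t = 0" by blast
  then show "x t * y t = 0" by simp
qed

lemma dot_commute: "finsupp x \<Longrightarrow> finsupp y \<Longrightarrow> dot x y = dot y x"
proof -
  assume x: "finsupp x" and y: "finsupp y"
  let ?S = "{t. x t \<noteq> 0} \<union> {t. y t \<noteq> 0}"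
  have fin: "finite ?S"
    using x y by (simp add: finsupp_def)
  have "dot x y = (\<Sum>t\<in>?S. x t * y t)"
    by (rule dot_eq_sum_left[OF x fin]) auto
  also have "\<dots> = dot y x"
    by (subst dot_eq_sum_left[OF y fin]) (auto simp: mult.commute)
  finally show ?thesis .
qed

lemma dot_add_left:
  assumes x: "finsupp x" and y: "finsupp y"
  shows "dot (\<lambda>t. x t + y t) z = dot x z + dot y z"
proof -
  let ?S = "{t. x t \<noteq> 0} \<union> {t. y t \<noteq> 0}"
  have fin: "finite ?S"
    using x y by (simp add: finsupp_def)
  have sub: "{t. x t + y t \<noteq> 0} \<subseteq> ?S"
    by auto
  show ?thesis
    using dot_eq_sum_left[OF x fin, of z] dot_eq_sum_left[OF y fin, of z]
      dot_eq_sum_left[OF finsupp_add[OF x y] fin sub, of z]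
    by (auto simp: distrib_right sum.distrib)
qed

lemma dot_diff_left:
  assumes x: "finsupp x" and y: "finsupp y"
  shows "dot (\<lambda>t. x t - y t) z = dot x z - dot y z"
proof -
  let ?S = "{t. x t \<noteq> 0} \<union> {t. y t \<noteq> 0}"
  have fin: "finite ?S"
    using x y by (simp add: finsupp_def)
  have sub: "{t. x t - y t \<noteq> 0} \<subseteq> ?S"
    by auto
  show ?thesis
    using dot_eq_sum_left[OF x fin, of z] dot_eq_sum_left[OF y fin, of z]
      dot_eq_sum_left[OF finsupp_diff[OF x y] fin sub, of z]
    by (auto simp: left_diff_distrib sum_subtractf)
qed

lemma dot_scale_left:
  assumes x: "finsupp x"
  shows "dot (\<lambda>t. c * x t) y = c * dot x y"
proof -
  have fin: "finite {t. x t \<noteq> 0}"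
    using x by (simp add: finsupp_def)
  have "dot (\<lambda>t. c * x t) y = (\<Sum>t | x t \<noteq> 0. c * x t * y t)"
    by (rule dot_eq_sum_left[OF finsupp_scale[OF x] fin]) auto
  then show ?thesis
    by (simp add: dot_def sum_distrib_left mult.assoc)
qed

lemma dot_sum_left:
  "(\<And>r. r < n \<Longrightarrow> finsupp (x r)) \<Longrightarrow> dot (\<lambda>t. \<Sum>r<(n::nat). x r t) y = (\<Sum>r<n. dot (x r) y)"
proof (induction n)
  case (Suc n)
  then show ?case
    by (simp add: dot_add_left[OF finsupp_sum])
qed (simp add: dot_def)

lemma dot_lincomb_left:
  "(\<And>r. r < n \<Longrightarrow> finsupp (x r)) \<Longrightarrow>
     dot (\<lambda>t. \<Sum>r<(n::nat). c r * x r t) y = (\<Sum>r<n. c r * dot (x r) y)"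
  by (simp add: dot_sum_left finsupp_scale dot_scale_left)

lemma dot_add_right: "dot x (\<lambda>t. y t + z t) = dot x y + dot x z"
  by (simp add: dot_def distrib_left sum.distrib)

lemma dot_scale_right: "dot x (\<lambda>t. c * y t) = c * dot x y"
  by (simp add: dot_def sum_distrib_left mult.left_commute)

lemma dot_diff_right: "dot x (\<lambda>t. y t - z t) = dot x y - dot x z"
  by (simp add: dot_def right_diff_distrib sum_subtractf)

lemma dot_lincomb_right: "dot x (\<lambda>t. \<Sum>r<n. c r * y r t) = (\<Sum>r<n. c r * dot x (y r))"
  unfolding dot_def by (simp add: sum_distrib_left mult.left_commute) (rule sum.swap)

lemma dot_zero_right [simp]: "dot x (\<lambda>t. 0) = 0"
  by (simp add: dot_def)

lemma dot_zero_left [simp]: "dot (\<lambda>t. 0) y = 0"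
  by (simp add: dot_def)

lemma dot_delta_left: "dot (delta s) y = (y s :: 'k::comm_ring_1)"
proof -
  have "dot (delta s) y = (\<Sum>t\<in>{s}. delta s t * y t)"
    by (rule dot_eq_sum_left[OF finsupp_delta]) (auto simp: delta_def)
  then show ?thesis
    by (simp add: delta_def)
qed

lemma dot_delta_right: "finsupp x \<Longrightarrow> dot x (delta s) = (x s :: 'k::comm_ring_1)"
proof -
  assume "finsupp x"
  then have "dot x (delta s) = (\<Sum>t\<in>{s}. x t * delta s t)"
    by (rule dot_eq_sum_right) (auto simp: delta_def)
  then show ?thesis
    by (simp add: delta_def)
qed

lemma dot_neq_zeroE:
  assumes "dot x y \<noteq> 0"
  obtains t where "x t \<noteq> 0" "y t \<noteq> 0"
proof -
  obtain t where "x t * y t \<noteq> 0"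
    using assms unfolding dot_def by (auto elim: sum.not_neutral_contains_not_neutral)
  then show thesis
    using that by (metis mult_zero_left mult_zero_right)
qed

lemma dot_swap:
  assumes z: "finsupp z" and X: "\<And>p. finsupp (X p)"
  shows "dot z (\<lambda>p. dot (X p) y) = dot (\<lambda>l. dot z (\<lambda>p. X p l)) y"
proof -
  define S where "S = {p. z p \<noteq> 0}"
  define U where "U = (\<Union>p\<in>S. {l. X p l \<noteq> 0})"
  have S: "finite S" and U: "finite U"
    using z X by (auto simp: S_def U_def finsupp_def)
  have sub: "{l. dot z (\<lambda>p. X p l) \<noteq> 0} \<subseteq> U"
    by (auto simp: U_def S_def elim: dot_neq_zeroE)
  have "dot z (\<lambda>p. dot (X p) y) = (\<Sum>p\<in>S. z p * dot (X p) y)"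
    by (simp add: dot_def S_def)
  also have "\<dots> = (\<Sum>p\<in>S. z p * (\<Sum>l\<in>U. X p l * y l))"
  proof (rule sum.cong[OF refl])
    fix p assume "p \<in> S"
    then have "dot (X p) y = (\<Sum>l\<in>U. X p l * y l)"
      by (intro dot_eq_sum_left X U) (auto simp: U_def)
    then show "z p * dot (X p) y = z p * (\<Sum>l\<in>U. X p l * y l)"
      by simp
  qed
  also have "\<dots> = (\<Sum>l\<in>U. (\<Sum>p\<in>S. z p * X p l) * y l)"
    by (simp add: sum_distrib_left sum_distrib_right mult.assoc sum.swap[of _ S])
  also have "\<dots> = dot (\<lambda>l. dot z (\<lambda>p. X p l)) y"
    using sub U by (subst dot_eq_sum_left) (auto simp: finsupp_def dot_def S_def intro: finite_subset)
  finally show ?thesis .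
qed

lemma rcfm_simps:
  "carrier RCFM = rcfm_carrier"
  "A \<otimes>\<^bsub>RCFM\<^esub> B = (\<lambda>i j. \<Sum>l | A i l \<noteq> 0. A i l * B l j)"
  "A \<oplus>\<^bsub>RCFM\<^esub> B = (\<lambda>i j. A i j + B i j)"
  "\<zero>\<^bsub>RCFM\<^esub> = (\<lambda>i j. 0)"
  "\<one>\<^bsub>RCFM\<^esub> = (\<lambda>i j. if i = j then 1 else 0)"
  by (simp_all add: RCFM_def)

lemma rcfm_mult_dot: "A \<otimes>\<^bsub>RCFM\<^esub> B = (\<lambda>i j. dot (A i) (\<lambda>l. B l j))"
  by (simp add: rcfm_simps dot_def)

lemma rcfm_carrier_iff:
  "A \<in> carrier RCFM \<longleftrightarrow> (\<forall>i. finsupp (A i)) \<and> (\<forall>j. finsupp (\<lambda>i. A i j))"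
  by (simp add: rcfm_simps rcfm_carrier_def finsupp_def)

lemma rcfm_mult_closed:
  assumes "A \<in> carrier RCFM" "B \<in> carrier RCFM"
  shows "A \<otimes>\<^bsub>RCFM\<^esub> B \<in> carrier (RCFM :: (nat \<Rightarrow> nat \<Rightarrow> 'k::field) ring)"
proof -
  have A: "\<And>i. finsupp (A i)" "\<And>j. finsupp (\<lambda>i. A i j)"
    and B: "\<And>i. finsupp (B i)" "\<And>j. finsupp (\<lambda>i. B i j)"
    using assms by (auto simp: rcfm_carrier_iff)
  have "finite {j. dot (A i) (\<lambda>l. B l j) \<noteq> 0}" for i
  proof (rule finite_subset)
    show "{j. dot (A i) (\<lambda>l. B l j) \<noteq> 0} \<subseteq> (\<Union>l\<in>{l. A i l \<noteq> 0}. {j. B l j \<noteq> 0})"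
      by (auto elim: dot_neq_zeroE)
    show "finite (\<Union>l\<in>{l. A i l \<noteq> 0}. {j. B l j \<noteq> 0})"
      using A B by (simp add: finsupp_def)
  qed
  moreover have "finite {i. dot (A i) (\<lambda>l. B l j) \<noteq> 0}" for j
  proof (rule finite_subset)
    show "{i. dot (A i) (\<lambda>l. B l j) \<noteq> 0} \<subseteq> (\<Union>l\<in>{l. B l j \<noteq> 0}. {i. A i l \<noteq> 0})"
      by (auto elim: dot_neq_zeroE)
    show "finite (\<Union>l\<in>{l. B l j \<noteq> 0}. {i. A i l \<noteq> 0})"
      using A B by (simp add: finsupp_def)
  qed
  ultimately show ?thesis
    by (simp add: rcfm_carrier_iff rcfm_mult_dot finsupp_def)
qed

lemma rcfm_mult_assoc:
  assumes A: "A \<in> carrier RCFM" and B: "B \<in> carrier RCFM"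
  shows "A \<otimes>\<^bsub>RCFM\<^esub> B \<otimes>\<^bsub>RCFM\<^esub> C = A \<otimes>\<^bsub>RCFM\<^esub> (B \<otimes>\<^bsub>RCFM\<^esub> C :: nat \<Rightarrow> nat \<Rightarrow> 'k::field)"
proof (intro ext)
  fix i j
  have rA: "finsupp (A i)" and rB: "\<And>m. finsupp (B m)"
    using A B by (auto simp: rcfm_carrier_iff)
  define S1 where "S1 = {m. A i m \<noteq> 0}"
  define S2 where "S2 = (\<Union>m\<in>S1. {l. B m l \<noteq> 0})"
  have fin1: "finite S1" and fin2: "finite S2"
    using rA rB by (auto simp: S1_def S2_def finsupp_def)
  have AB: "(A \<otimes>\<^bsub>RCFM\<^esub> B) i l = (\<Sum>m\<in>S1. A i m * B m l)" for l
    by (simp add: rcfm_simps S1_def)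
  have "(A \<otimes>\<^bsub>RCFM\<^esub> B) \<in> carrier RCFM"
    by (rule rcfm_mult_closed[OF A B])
  then have "(A \<otimes>\<^bsub>RCFM\<^esub> B \<otimes>\<^bsub>RCFM\<^esub> C) i j = (\<Sum>l\<in>S2. (A \<otimes>\<^bsub>RCFM\<^esub> B) i l * C l j)"
    unfolding rcfm_mult_dot[of "A \<otimes>\<^bsub>RCFM\<^esub> B"]
    by (intro dot_eq_sum_left fin2) (auto simp: rcfm_carrier_iff AB S2_def
        elim!: sum.not_neutral_contains_not_neutral)
  also have "\<dots> = (\<Sum>m\<in>S1. A i m * (\<Sum>l\<in>S2. B m l * C l j))"
    by (simp add: AB sum_distrib_right sum_distrib_left mult.assoc sum.swap[of _ S2])
  also have "\<dots> = (\<Sum>m\<in>S1. A i m * (B \<otimes>\<^bsub>RCFM\<^esub> C) m j)"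
  proof (rule sum.cong[OF refl])
    fix m assume "m \<in> S1"
    then have "(B \<otimes>\<^bsub>RCFM\<^esub> C) m j = (\<Sum>l\<in>S2. B m l * C l j)"
      unfolding rcfm_mult_dot by (intro dot_eq_sum_left rB fin2) (auto simp: S2_def)
    then show "A i m * (\<Sum>l\<in>S2. B m l * C l j) = A i m * (B \<otimes>\<^bsub>RCFM\<^esub> C) m j"
      by simp
  qed
  also have "\<dots> = (A \<otimes>\<^bsub>RCFM\<^esub> (B \<otimes>\<^bsub>RCFM\<^esub> C)) i j"
    by (simp add: rcfm_simps S1_def)
  finally show "(A \<otimes>\<^bsub>RCFM\<^esub> B \<otimes>\<^bsub>RCFM\<^esub> C) i j = (A \<otimes>\<^bsub>RCFM\<^esub> (B \<otimes>\<^bsub>RCFM\<^esub> C)) i j" .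
qed

lemma ring_RCFM: "ring (RCFM :: (nat \<Rightarrow> nat \<Rightarrow> 'k::field) ring)"
proof (rule ringI)
  show "abelian_group (RCFM :: (nat \<Rightarrow> nat \<Rightarrow> 'k) ring)"
  proof (rule abelian_groupI)
    fix x y :: "nat \<Rightarrow> nat \<Rightarrow> 'k"
    assume "x \<in> carrier RCFM" "y \<in> carrier RCFM"
    then show "x \<oplus>\<^bsub>RCFM\<^esub> y \<in> carrier RCFM"
      by (simp add: rcfm_carrier_iff finsupp_add rcfm_simps(3))
  next
    fix x :: "nat \<Rightarrow> nat \<Rightarrow> 'k"
    assume "x \<in> carrier RCFM"
    then show "\<exists>y\<in>carrier RCFM. y \<oplus>\<^bsub>RCFM\<^esub> x = \<zero>\<^bsub>RCFM\<^esub>"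
      by (intro bexI[of _ "\<lambda>i j. - x i j"])
        (auto simp: rcfm_simps(3,4) rcfm_carrier_iff finsupp_def)
  qed (auto simp: rcfm_simps(3,4) rcfm_carrier_iff ac_simps)
next
  show "monoid (RCFM :: (nat \<Rightarrow> nat \<Rightarrow> 'k) ring)"
  proof (rule monoidI)
    fix x :: "nat \<Rightarrow> nat \<Rightarrow> 'k"
    assume x: "x \<in> carrier RCFM"
    have one: "\<one>\<^bsub>RCFM\<^esub> = (\<lambda>i. delta i :: nat \<Rightarrow> 'k)"
      by (auto simp: rcfm_simps(5) delta_def fun_eq_iff)
    show "\<one>\<^bsub>RCFM\<^esub> \<otimes>\<^bsub>RCFM\<^esub> x = x"
      by (simp add: rcfm_mult_dot one dot_delta_left)
    have "(\<lambda>l. delta l j) = (delta j :: nat \<Rightarrow> 'k)" for j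
      by (auto simp: delta_def)
    then show "x \<otimes>\<^bsub>RCFM\<^esub> \<one>\<^bsub>RCFM\<^esub> = x"
      using x by (simp add: rcfm_mult_dot one rcfm_carrier_iff dot_delta_right)
  next
    show "\<one>\<^bsub>RCFM\<^esub> \<in> carrier (RCFM :: (nat \<Rightarrow> nat \<Rightarrow> 'k) ring)"
      by (simp add: rcfm_carrier_iff rcfm_simps(5) finsupp_def)
  qed (simp_all add: rcfm_mult_closed rcfm_mult_assoc)
next
  fix x y z :: "nat \<Rightarrow> nat \<Rightarrow> 'k"
  assume x: "x \<in> carrier RCFM" and y: "y \<in> carrier RCFM"
  then show "(x \<oplus>\<^bsub>RCFM\<^esub> y) \<otimes>\<^bsub>RCFM\<^esub> z = x \<otimes>\<^bsub>RCFM\<^esub> z \<oplus>\<^bsub>RCFM\<^esub> y \<otimes>\<^bsub>RCFM\<^esub> z"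
    by (simp add: rcfm_mult_dot rcfm_simps(3) rcfm_carrier_iff dot_add_left)
  show "z \<otimes>\<^bsub>RCFM\<^esub> (x \<oplus>\<^bsub>RCFM\<^esub> y) = z \<otimes>\<^bsub>RCFM\<^esub> x \<oplus>\<^bsub>RCFM\<^esub> z \<otimes>\<^bsub>RCFM\<^esub> y"
    by (simp add: rcfm_mult_dot rcfm_simps(3) dot_add_right)
qed

lemma right_module_abelian_group: "right_module R M \<Longrightarrow> abelian_group M"
  by (simp add: right_module_def)

lemma rsmult_closed:
  "right_module R M \<Longrightarrow> x \<in> carrier M \<Longrightarrow> r \<in> carrier R \<Longrightarrow> rsmult M x r \<in> carrier M"
  by (simp add: right_module_def)

lemma rsmult_add_left:
  "right_module R M \<Longrightarrow> x \<in> carrier M \<Longrightarrow> y \<in> carrier M \<Longrightarrow> r \<in> carrier R \<Longrightarrow>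
     rsmult M (x \<oplus>\<^bsub>M\<^esub> y) r = rsmult M x r \<oplus>\<^bsub>M\<^esub> rsmult M y r"
  by (simp add: right_module_def)

lemma rsmult_add_right:
  "right_module R M \<Longrightarrow> x \<in> carrier M \<Longrightarrow> r \<in> carrier R \<Longrightarrow> s \<in> carrier R \<Longrightarrow>
     rsmult M x (r \<oplus>\<^bsub>R\<^esub> s) = rsmult M x r \<oplus>\<^bsub>M\<^esub> rsmult M x s"
  by (simp add: right_module_def)

lemma rsmult_mult:
  "right_module R M \<Longrightarrow> x \<in> carrier M \<Longrightarrow> r \<in> carrier R \<Longrightarrow> s \<in> carrier R \<Longrightarrow>
     rsmult M x (r \<otimes>\<^bsub>R\<^esub> s) = rsmult M (rsmult M x r) s"
  by (simp add: right_module_def)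

lemma rsmult_zero:
  assumes M: "right_module R M" and r: "r \<in> carrier R"
  shows "rsmult M \<zero>\<^bsub>M\<^esub> r = \<zero>\<^bsub>M\<^esub>"
proof -
  interpret M: abelian_group M
    using M by (rule right_module_abelian_group)
  have c: "rsmult M \<zero>\<^bsub>M\<^esub> r \<in> carrier M"
    using M r by (simp add: rsmult_closed)
  have "rsmult M \<zero>\<^bsub>M\<^esub> r \<oplus>\<^bsub>M\<^esub> rsmult M \<zero>\<^bsub>M\<^esub> r = rsmult M \<zero>\<^bsub>M\<^esub> r \<oplus>\<^bsub>M\<^esub> \<zero>\<^bsub>M\<^esub>"
    using rsmult_add_left[OF M M.zero_closed M.zero_closed r] c by simp
  then show ?thesis
    using c by simp
qed

lemma rhom_abelian_group_hom:
  assumes A: "right_module R A" and B: "right_module R B" and f: "f \<in> rhom R A B"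
  shows "abelian_group_hom A B f"
proof -
  interpret A: abelian_group A
    using A by (rule right_module_abelian_group)
  interpret B: abelian_group B
    using B by (rule right_module_abelian_group)
  have "f \<in> hom (add_monoid A) (add_monoid B)"
    using f by (auto simp: rhom_def hom_def)
  then show ?thesis
    by (intro abelian_group_homI A.abelian_group_axioms B.abelian_group_axioms
        group_hom.intro group_hom_axioms.intro A.a_group B.a_group)
qed

lemma rhom_rsmult:
  "f \<in> rhom R A B \<Longrightarrow> x \<in> carrier A \<Longrightarrow> r \<in> carrier R \<Longrightarrow> f (rsmult A x r) = rsmult B (f x) r"
  by (simp add: rhom_def)

lemma (in abelian_group) diff_eq_zeroD:
  "x \<ominus> y = \<zero> \<Longrightarrow> x \<in> carrier G \<Longrightarrow> y \<in> carrier G \<Longrightarrow> x = y"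
  by (metis a_minus_def add.inv_solve_right l_zero zero_closed)

text \<open>Unlike \<open>finsum\<close>, \<open>lsum\<close> does not depend on the carrier, so it is unchanged by
  passing to a submodule.\<close>

primrec lsum :: "('a, 'm) ring_scheme \<Rightarrow> (nat \<Rightarrow> 'a) \<Rightarrow> nat \<Rightarrow> 'a" where
  "lsum M f 0 = \<zero>\<^bsub>M\<^esub>"
| "lsum M f (Suc n) = lsum M f n \<oplus>\<^bsub>M\<^esub> f n"

lemma (in abelian_group) lsum_closed:
  "(\<And>j. j < n \<Longrightarrow> f j \<in> carrier G) \<Longrightarrow> lsum G f n \<in> carrier G"
  by (induction n) auto

lemma lsum_cong:
  "(\<And>j. j < n \<Longrightarrow> f j = g j) \<Longrightarrow> lsum M f n = lsum M g n"
  by (induction n) auto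

lemma (in abelian_group) lsum_add:
  "(\<And>j. j < n \<Longrightarrow> f j \<in> carrier G) \<Longrightarrow> (\<And>j. j < n \<Longrightarrow> g j \<in> carrier G) \<Longrightarrow>
     lsum G (\<lambda>j. f j \<oplus> g j) n = lsum G f n \<oplus> lsum G g n"
  by (induction n) (simp_all add: lsum_closed a_ac)

lemma (in abelian_group_hom) hom_lsum:
  "(\<And>j. j < n \<Longrightarrow> f j \<in> carrier G) \<Longrightarrow> h (lsum G f n) = lsum H (\<lambda>j. h (f j)) n"
  by (induction n) (simp_all add: G.lsum_closed)

lemma lsum_rsmult:
  assumes M: "right_module R M" and r: "r \<in> carrier R"
  shows "(\<And>j. j < n \<Longrightarrow> f j \<in> carrier M) \<Longrightarrow>
    rsmult M (lsum M f n) r = lsum M (\<lambda>j. rsmult M (f j) r) n"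
proof (induction n)
  case 0
  then show ?case
    using rsmult_zero[OF M r] by simp
next
  case (Suc n)
  then show ?case
    using abelian_group.lsum_closed[OF right_module_abelian_group[OF M]]
    by (simp add: rsmult_add_left[OF M _ _ r])
qed

section \<open>Projective modules and the dual basis lemma\<close>

lemma lsum_rsmult_rhom:
  assumes A: "right_module R A" and a: "\<And>j. j < m \<Longrightarrow> a j \<in> carrier A"
    and \<phi>_closed: "\<And>j x. j < m \<Longrightarrow> x \<in> carrier P \<Longrightarrow> \<phi> j x \<in> carrier R"
    and \<phi>_add: "\<And>j x y. j < m \<Longrightarrow> x \<in> carrier P \<Longrightarrow> y \<in> carrier P \<Longrightarrow>
      \<phi> j (x \<oplus>\<^bsub>P\<^esub> y) = \<phi> j x \<oplus>\<^bsub>R\<^esub> \<phi> j y"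
    and \<phi>_rsmult: "\<And>j x r. j < m \<Longrightarrow> x \<in> carrier P \<Longrightarrow> r \<in> carrier R \<Longrightarrow>
      \<phi> j (rsmult P x r) = \<phi> j x \<otimes>\<^bsub>R\<^esub> r"
  shows "(\<lambda>x. lsum A (\<lambda>j. rsmult A (a j) (\<phi> j x)) m) \<in> rhom R P A"
proof -
  interpret A: abelian_group A
    using A by (rule right_module_abelian_group)
  have closed: "rsmult A (a j) (\<phi> j x) \<in> carrier A" if "j < m" "x \<in> carrier P" for j x
    using that by (simp add: rsmult_closed[OF A] a \<phi>_closed)
  show ?thesis
    unfolding rhom_def
  proof (intro CollectI conjI ballI funcsetI)
    fix x y assume x: "x \<in> carrier P" and y: "y \<in> carrier P"
    have "lsum A (\<lambda>j. rsmult A (a j) (\<phi> j (x \<oplus>\<^bsub>P\<^esub> y))) m =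
      lsum A (\<lambda>j. rsmult A (a j) (\<phi> j x) \<oplus>\<^bsub>A\<^esub> rsmult A (a j) (\<phi> j y)) m"
      by (rule lsum_cong) (simp add: \<phi>_add rsmult_add_right[OF A] a \<phi>_closed x y)
    then show "lsum A (\<lambda>j. rsmult A (a j) (\<phi> j (x \<oplus>\<^bsub>P\<^esub> y))) m =
      lsum A (\<lambda>j. rsmult A (a j) (\<phi> j x)) m \<oplus>\<^bsub>A\<^esub> lsum A (\<lambda>j. rsmult A (a j) (\<phi> j y)) m"
      by (simp add: A.lsum_add closed x y)
  next
    fix x r assume x: "x \<in> carrier P" and r: "r \<in> carrier R"
    have "lsum A (\<lambda>j. rsmult A (a j) (\<phi> j (rsmult P x r))) m =
      lsum A (\<lambda>j. rsmult A (rsmult A (a j) (\<phi> j x)) r) m"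
      by (rule lsum_cong) (simp add: \<phi>_rsmult rsmult_mult[OF A] a \<phi>_closed x r)
    then show "lsum A (\<lambda>j. rsmult A (a j) (\<phi> j (rsmult P x r))) m =
      rsmult A (lsum A (\<lambda>j. rsmult A (a j) (\<phi> j x)) m) r"
      by (simp add: lsum_rsmult[OF A r] closed x)
  qed (simp add: A.lsum_closed closed)
qed

lemma dual_basis_projective:
  fixes R :: "('r, 'c) ring_scheme" and P :: "('p, 'r, 'd) rmodule_scheme"
  assumes P: "right_module R P"
    and p: "\<And>j. j < m \<Longrightarrow> p j \<in> carrier P"
    and \<phi>_closed: "\<And>j x. j < m \<Longrightarrow> x \<in> carrier P \<Longrightarrow> \<phi> j x \<in> carrier R"
    and \<phi>_add: "\<And>j x y. j < m \<Longrightarrow> x \<in> carrier P \<Longrightarrow> y \<in> carrier P \<Longrightarrow>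
      \<phi> j (x \<oplus>\<^bsub>P\<^esub> y) = \<phi> j x \<oplus>\<^bsub>R\<^esub> \<phi> j y"
    and \<phi>_rsmult: "\<And>j x r. j < m \<Longrightarrow> x \<in> carrier P \<Longrightarrow> r \<in> carrier R \<Longrightarrow>
      \<phi> j (rsmult P x r) = \<phi> j x \<otimes>\<^bsub>R\<^esub> r"
    and expansion: "\<And>x. x \<in> carrier P \<Longrightarrow> x = lsum P (\<lambda>j. rsmult P (p j) (\<phi> j x)) m"
  shows "projective R P TYPE('b)"
  unfolding projective_def
proof (intro allI impI)
  fix A B :: "('b, 'r) rmodule" and g f
  assume "right_module R A \<and> right_module R B \<and> g \<in> rhom R A B \<and> g ` carrier A = carrier B \<and>
    f \<in> rhom R P B"
  then have A: "right_module R A" and B: "right_module R B" and g: "g \<in> rhom R A B"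
    and onto: "g ` carrier A = carrier B" and f: "f \<in> rhom R P B"
    by auto
  interpret g: abelian_group_hom A B g
    by (rule rhom_abelian_group_hom[OF A B g])
  interpret f: abelian_group_hom P B f
    by (rule rhom_abelian_group_hom[OF P B f])
  have "\<exists>a\<in>carrier A. g a = f (p j)" if "j < m" for j
    using onto p[OF that] by (metis f.hom_closed imageE)
  then obtain a where a: "\<And>j. j < m \<Longrightarrow> a j \<in> carrier A" "\<And>j. j < m \<Longrightarrow> g (a j) = f (p j)"
    by metis
  define h where "h x = lsum A (\<lambda>j. rsmult A (a j) (\<phi> j x)) m" for x
  have "h \<in> rhom R P A"
    unfolding h_def by (rule lsum_rsmult_rhom[OF A a(1) \<phi>_closed \<phi>_add \<phi>_rsmult])
  moreover have "g (h x) = f x" if x: "x \<in> carrier P" for x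
  proof -
    have "g (h x) = lsum B (\<lambda>j. g (rsmult A (a j) (\<phi> j x))) m"
      unfolding h_def by (rule g.hom_lsum) (simp add: rsmult_closed[OF A] a \<phi>_closed x)
    also have "\<dots> = lsum B (\<lambda>j. f (rsmult P (p j) (\<phi> j x))) m"
      by (rule lsum_cong) (simp add: rhom_rsmult[OF g] rhom_rsmult[OF f] a p \<phi>_closed x)
    also have "\<dots> = f x"
      using expansion[OF x] f.hom_lsum[of m "\<lambda>j. rsmult P (p j) (\<phi> j x)"]
      by (simp add: rsmult_closed[OF P] p \<phi>_closed x)
    finally show ?thesis .
  qed
  ultimately show "\<exists>h\<in>rhom R P A. \<forall>x\<in>carrier P. g (h x) = f x"
    by blast
qed

lemma free_rmod_simps:
  "carrier (free_rmod R n) = {v. (\<forall>i<n. v i \<in> carrier R) \<and> (\<forall>i\<ge>n. v i = \<zero>\<^bsub>R\<^esub>)}"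
  "\<zero>\<^bsub>free_rmod R n\<^esub> = (\<lambda>i. \<zero>\<^bsub>R\<^esub>)"
  "v \<oplus>\<^bsub>free_rmod R n\<^esub> w = (\<lambda>i. if i < n then v i \<oplus>\<^bsub>R\<^esub> w i else \<zero>\<^bsub>R\<^esub>)"
  "rsmult (free_rmod R n) v r = (\<lambda>i. if i < n then v i \<otimes>\<^bsub>R\<^esub> r else \<zero>\<^bsub>R\<^esub>)"
  by (simp_all add: free_rmod_def)

lemma free_right_module:
  assumes "ring R"
  shows "right_module R (free_rmod R n)"
proof -
  interpret R: ring R by fact
  have "abelian_group (free_rmod R n)"
  proof (rule abelian_groupI)
    fix x assume x: "x \<in> carrier (free_rmod R n)"
    show "\<exists>y\<in>carrier (free_rmod R n). y \<oplus>\<^bsub>free_rmod R n\<^esub> x = \<zero>\<^bsub>free_rmod R n\<^esub>"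
      by (rule bexI[of _ "\<lambda>i. if i < n then \<ominus>\<^bsub>R\<^esub> x i else \<zero>\<^bsub>R\<^esub>"])
        (use x in \<open>auto simp: free_rmod_simps fun_eq_iff R.l_neg\<close>)
  qed (auto simp: free_rmod_simps fun_eq_iff R.a_ac)
  then show ?thesis
    unfolding right_module_def
    by (auto simp: free_rmod_simps fun_eq_iff R.l_distr R.r_distr R.m_assoc)
qed

definition free_unit :: "('r, 'c) ring_scheme \<Rightarrow> nat \<Rightarrow> nat \<Rightarrow> 'r" where
  "free_unit R j = (\<lambda>i. if i = j then \<one>\<^bsub>R\<^esub> else \<zero>\<^bsub>R\<^esub>)"

lemma free_unit_closed: "ring R \<Longrightarrow> j < n \<Longrightarrow> free_unit R j \<in> carrier (free_rmod R n)"
  by (auto simp: free_unit_def free_rmod_simps ring.ring_simprules)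

lemma lsum_free_rmod_apply:
  "lsum (free_rmod R n) f k i = (if i < n then lsum R (\<lambda>j. f j i) k else \<zero>\<^bsub>R\<^esub>)"
  by (induction k) (simp_all add: free_rmod_simps)

lemma (in ring) lsum_single:
  "a \<in> carrier R \<Longrightarrow> lsum R (\<lambda>j. if j = i then a else \<zero>) k = (if i < k then a else \<zero>)"
  by (induction k) auto

lemma free_rmod_expansion:
  assumes R: "ring R" and x: "x \<in> carrier (free_rmod R n)"
  shows "x = lsum (free_rmod R n) (\<lambda>j. rsmult (free_rmod R n) (free_unit R j) (x j)) n"
proof (rule ext)
  interpret R: ring R by fact
  fix i
  have "lsum R (\<lambda>j. rsmult (free_rmod R n) (free_unit R j) (x j) i) n =
    lsum R (\<lambda>j. if j = i then x i else \<zero>\<^bsub>R\<^esub>) n" if "i < n"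
    by (rule lsum_cong) (use x that in \<open>auto simp: free_rmod_simps free_unit_def\<close>)
  then show "x i = lsum (free_rmod R n) (\<lambda>j. rsmult (free_rmod R n) (free_unit R j) (x j)) n i"
    using x by (simp add: lsum_free_rmod_apply R.lsum_single free_rmod_simps)
qed

definition fixed_submodule :: "('a, 'r, 'd) rmodule_scheme \<Rightarrow> ('a \<Rightarrow> 'a) \<Rightarrow> ('a, 'r, 'd) rmodule_scheme"
  where "fixed_submodule M E = M\<lparr>carrier := {v \<in> carrier M. E v = v}\<rparr>"

lemma fixed_submodule_simps:
  "carrier (fixed_submodule M E) = {v \<in> carrier M. E v = v}"
  "\<zero>\<^bsub>fixed_submodule M E\<^esub> = \<zero>\<^bsub>M\<^esub>"
  "add (fixed_submodule M E) = add M"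
  "rsmult (fixed_submodule M E) = rsmult M"
  "lsum (fixed_submodule M E) f k = lsum M f k"
  by (simp_all add: fixed_submodule_def) (induction k, simp_all)

lemma fixed_submodule_right_module:
  assumes M: "right_module R M" and E: "E \<in> rhom R M M"
  shows "right_module R (fixed_submodule M E)"
proof -
  interpret E: abelian_group_hom M M E
    by (rule rhom_abelian_group_hom[OF M M E])
  have "abelian_group (fixed_submodule M E)"
  proof (rule abelian_groupI)
    fix x assume x: "x \<in> carrier (fixed_submodule M E)"
    show "\<exists>y\<in>carrier (fixed_submodule M E). y \<oplus>\<^bsub>fixed_submodule M E\<^esub> x = \<zero>\<^bsub>fixed_submodule M E\<^esub>"
      by (rule bexI[of _ "\<ominus>\<^bsub>M\<^esub> x"]) (use x in \<open>auto simp: fixed_submodule_simps E.G.l_neg\<close>)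
  qed (auto simp: fixed_submodule_simps E.G.a_ac)
  then show ?thesis
    using M E unfolding right_module_def by (auto simp: fixed_submodule_simps rhom_def)
qed

lemma fixed_submodule_projective:
  fixes R :: "('r, 'c) ring_scheme"
  assumes R: "ring R" and E: "E \<in> rhom R (free_rmod R n) (free_rmod R n)"
    and idem: "\<And>v. v \<in> carrier (free_rmod R n) \<Longrightarrow> E (E v) = E v"
  shows "projective R (fixed_submodule (free_rmod R n) E) TYPE('b)"
proof -
  let ?F = "free_rmod R n"
  have F: "right_module R ?F"
    by (rule free_right_module[OF R])
  interpret E: abelian_group_hom ?F ?F E
    by (rule rhom_abelian_group_hom[OF F F E])
  show ?thesis
  proof (rule dual_basis_projective[OF fixed_submodule_right_module[OF F E],
        where p="\<lambda>j. E (free_unit R j)" and \<phi>="\<lambda>j x. x j"])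
    fix x assume "x \<in> carrier (fixed_submodule ?F E)"
    then have x: "x \<in> carrier ?F" "E x = x"
      by (auto simp: fixed_submodule_simps)
    have "x = E (lsum ?F (\<lambda>j. rsmult ?F (free_unit R j) (x j)) n)"
      using free_rmod_expansion[OF R x(1)] x(2) by simp
    also have "\<dots> = lsum ?F (\<lambda>j. E (rsmult ?F (free_unit R j) (x j))) n"
      using x(1) by (intro E.hom_lsum rsmult_closed[OF F] free_unit_closed[OF R]) (auto simp: free_rmod_simps)
    also have "\<dots> = lsum ?F (\<lambda>j. rsmult ?F (E (free_unit R j)) (x j)) n"
      using x(1) by (intro lsum_cong rhom_rsmult[OF E] free_unit_closed[OF R]) (auto simp: free_rmod_simps)
    finally show "x = lsum (fixed_submodule ?F E)
        (\<lambda>j. rsmult (fixed_submodule ?F E) (E (free_unit R j)) (x j)) n"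
      by (simp add: fixed_submodule_simps)
  next
    fix j assume "j < n"
    then have "free_unit R j \<in> carrier ?F"
      by (rule free_unit_closed[OF R])
    then show "E (free_unit R j) \<in> carrier (fixed_submodule ?F E)"
      by (simp add: fixed_submodule_simps idem)
  qed (auto simp: fixed_submodule_simps free_rmod_simps)
qed

lemma rhom_fixed_submodule: "f \<in> rhom R M N \<Longrightarrow> f \<in> rhom R (fixed_submodule M E) N"
  by (auto simp: rhom_def fixed_submodule_simps)

lemma free_rmod_projective: "ring R \<Longrightarrow> projective R (free_rmod R n) TYPE('b)"
  using fixed_submodule_projective[of R "\<lambda>v. v" n]
  by (simp add: fixed_submodule_def rhom_def free_rmod_def)

lemma (in abelian_group_hom) inj_on_fixed_points:
  assumes E: "abelian_group_hom G G E"
    and ker: "\<And>v. v \<in> carrier G \<Longrightarrow> E v = \<zero> \<longleftrightarrow> h v = \<zero>\<^bsub>H\<^esub>"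
  shows "inj_on h {v \<in> carrier G. E v = v}"
proof (rule inj_onI)
  interpret E: abelian_group_hom G G E by (rule E)
  fix x y assume x: "x \<in> {v \<in> carrier G. E v = v}" and y: "y \<in> {v \<in> carrier G. E v = v}"
    and "h x = h y"
  then have "h (x \<ominus> y) = \<zero>\<^bsub>H\<^esub>"
    by (simp add: a_minus_def H.r_neg)
  then have "E (x \<ominus> y) = \<zero>"
    using x y by (simp add: ker)
  then have "x \<ominus> y = \<zero>"
    using x y by (simp add: a_minus_def)
  then show "x = y"
    using x y by (auto intro: G.diff_eq_zeroD)
qed

lemma (in abelian_group_hom) image_fixed_points:
  assumes E: "abelian_group_hom G G E"
    and idem: "\<And>v. v \<in> carrier G \<Longrightarrow> E (E v) = E v"
    and ker: "\<And>v. v \<in> carrier G \<Longrightarrow> E v = \<zero> \<longleftrightarrow> h v = \<zero>\<^bsub>H\<^esub>"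
  shows "h ` {v \<in> carrier G. E v = v} = h ` carrier G"
proof
  interpret E: abelian_group_hom G G E by (rule E)
  show "h ` carrier G \<subseteq> h ` {v \<in> carrier G. E v = v}"
  proof
    fix z assume "z \<in> h ` carrier G"
    then obtain y where y: "y \<in> carrier G" and z: "z = h y"
      by blast
    have "E (y \<ominus> E y) = \<zero>"
      using y by (simp add: a_minus_def idem G.r_neg)
    then have "h (y \<ominus> E y) = \<zero>\<^bsub>H\<^esub>"
      using y by (simp add: ker)
    then have "h y = h (E y)"
      using y by (auto simp: a_minus_def intro: H.diff_eq_zeroD)
    then show "z \<in> h ` {v \<in> carrier G. E v = v}"
      using y z idem by auto
  qed
qed auto

section \<open>Biorthogonal systems adapted to a dual pair\<close>

locale dual_pair =
  fixes K L :: "('i::countable \<Rightarrow> 'k::field) set"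
  assumes K_finsupp: "x \<in> K \<Longrightarrow> finsupp x" and L_finsupp: "y \<in> L \<Longrightarrow> finsupp y"
    and K_zero: "(\<lambda>t. 0) \<in> K" and L_zero: "(\<lambda>t. 0) \<in> L"
    and K_add: "x \<in> K \<Longrightarrow> x' \<in> K \<Longrightarrow> (\<lambda>t. x t + x' t) \<in> K"
    and L_add: "y \<in> L \<Longrightarrow> y' \<in> L \<Longrightarrow> (\<lambda>t. y t + y' t) \<in> L"
    and K_scale: "x \<in> K \<Longrightarrow> (\<lambda>t. c * x t) \<in> K"
    and L_scale: "y \<in> L \<Longrightarrow> (\<lambda>t. c * y t) \<in> L"
    and orthogonal: "x \<in> K \<Longrightarrow> y \<in> L \<Longrightarrow> dot x y = 0"
    and K_separate: "finsupp v \<Longrightarrow> v \<notin> K \<Longrightarrow> \<exists>y\<in>L. dot v y = 1"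
    and L_separate: "finsupp w \<Longrightarrow> w \<notin> L \<Longrightarrow> \<exists>x\<in>K. dot w x = 1"
begin

lemma K_lincomb: "(\<And>s. s < n \<Longrightarrow> c s = 0 \<or> X s \<in> K) \<Longrightarrow> (\<lambda>t. \<Sum>s<(n::nat). c s * X s t) \<in> K"
proof (induction n)
  case (Suc n)
  have "(\<lambda>t. c n * X n t) \<in> K"
    using Suc.prems[of n] K_scale[of "X n" "c n"] K_zero by auto
  then show ?case
    using K_add[OF Suc.IH] Suc.prems by simp
qed (simp add: K_zero)

lemma K_diff: "x \<in> K \<Longrightarrow> x' \<in> K \<Longrightarrow> (\<lambda>t. x t - x' t) \<in> K"
  using K_add[of x "\<lambda>t. (-1) * x' t"] K_scale[of x' "-1"] by simp

end

sublocale dual_pair \<subseteq> swapped: dual_pair L K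
proof
  fix y x assume "y \<in> L" "x \<in> K"
  then show "dot y x = 0"
    using orthogonal[of x y] dot_commute[of y x] K_finsupp L_finsupp by simp
qed (use K_finsupp L_finsupp K_zero L_zero K_add L_add K_scale L_scale K_separate L_separate in auto)

definition biorth ::
  "('i \<Rightarrow> 'k::field) set \<Rightarrow> ('i \<Rightarrow> 'k) set \<Rightarrow> (nat \<Rightarrow> 'i \<Rightarrow> 'k) \<Rightarrow> (nat \<Rightarrow> 'i \<Rightarrow> 'k) \<Rightarrow>
    (nat \<Rightarrow> bool) \<Rightarrow> nat \<Rightarrow> bool" where
  "biorth K L A B T n \<longleftrightarrow>
     (\<forall>r<n. finsupp (A r) \<and> finsupp (B r) \<and>
        (dot (A r) (B r) = 1 \<or> A r = (\<lambda>t. 0) \<and> B r = (\<lambda>t. 0)) \<and>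
        (if T r then A r \<in> K else B r \<in> L)) \<and>
     (\<forall>r<n. \<forall>s<n. r \<noteq> s \<longrightarrow> dot (A r) (B s) = 0)"

lemma biorthD:
  assumes "biorth K L A B T n" "r < n"
  shows "finsupp (A r)" "finsupp (B r)" "dot (A r) (B r) = 1 \<or> A r = (\<lambda>t. 0) \<and> B r = (\<lambda>t. 0)"
    "T r \<Longrightarrow> A r \<in> K" "\<not> T r \<Longrightarrow> B r \<in> L" "s < n \<Longrightarrow> r \<noteq> s \<Longrightarrow> dot (A r) (B s) = 0"
  using assms by (auto simp: biorth_def)

lemma biorth_Suc_iff:
  "biorth K L A B T (Suc n) \<longleftrightarrow> biorth K L A B T n \<and> finsupp (A n) \<and> finsupp (B n) \<and>
     (dot (A n) (B n) = 1 \<or> A n = (\<lambda>t. 0) \<and> B n = (\<lambda>t. 0)) \<and> (if T n then A n \<in> K else B n \<in> L) \<and>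
     (\<forall>r<n. dot (A n) (B r) = 0 \<and> dot (A r) (B n) = 0)"
  unfolding biorth_def less_Suc_eq by (auto simp del: if_bool_eq_conj)

lemma biorth_swap: "biorth K L A B T n \<longleftrightarrow> biorth L K B A (\<lambda>r. \<not> T r) n"
proof -
  have swap: "biorth L K B A (\<lambda>r. \<not> T r) n" if bi: "biorth K L A B T n" for K L A B T
  proof -
    have "dot (B r) (A s) = dot (A s) (B r)" if "r < n" "s < n" for r s
      using dot_commute[OF biorthD(2)[OF bi that(1)] biorthD(1)[OF bi that(2)]] .
    then show ?thesis
      using bi unfolding biorth_def by (auto simp del: if_bool_eq_conj)
  qed
  show ?thesis
    using swap[of K L A B T] swap[of L K B A "\<lambda>r. \<not> T r"] by auto
qed

definition residual ::
  "(nat \<Rightarrow> 'i \<Rightarrow> 'k::comm_ring) \<Rightarrow> (nat \<Rightarrow> 'i \<Rightarrow> 'k) \<Rightarrow> nat \<Rightarrow> ('i \<Rightarrow> 'k) \<Rightarrow> 'i \<Rightarrow> 'k" where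
  "residual A B n v = (\<lambda>t. v t - (\<Sum>s<n. dot v (B s) * A s t))"

lemma finsupp_residual:
  "finsupp v \<Longrightarrow> (\<And>s. s < n \<Longrightarrow> finsupp (A s)) \<Longrightarrow> finsupp (residual A B n v)"
  unfolding residual_def by (intro finsupp_diff finsupp_lincomb)

lemma residual_cong:
  "(\<And>s. s < n \<Longrightarrow> A s = A' s) \<Longrightarrow> (\<And>s. s < n \<Longrightarrow> B s = B' s) \<Longrightarrow>
    residual A B n v = residual A' B' n v"
  unfolding residual_def by (auto intro!: sum.cong)

lemma dot_residual_left:
  assumes bi: "biorth K L A B T n" and v: "finsupp v" and r: "r < n"
  shows "dot (residual A B n v) (B r) = 0"
proof -
  have "dot (residual A B n v) (B r) = dot v (B r) - (\<Sum>s<n. dot v (B s) * dot (A s) (B r))"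
    unfolding residual_def
    by (simp add: dot_diff_left[OF v finsupp_lincomb] dot_lincomb_left biorthD[OF bi])
  also have "(\<Sum>s<n. dot v (B s) * dot (A s) (B r)) = (\<Sum>s\<in>{r}. dot v (B s) * dot (A s) (B r))"
    by (rule sum.mono_neutral_right) (use r biorthD(6)[OF bi] in auto)
  finally show ?thesis
    using biorthD(3)[OF bi r] by auto
qed

lemma dot_residual_right:
  assumes bi: "biorth K L A B T n" and d: "finsupp d" and r: "r < n"
  shows "dot (A r) (residual B A n d) = 0"
proof -
  have "dot (residual B A n d) (A r) = 0"
    using dot_residual_left[OF iffD1[OF biorth_swap bi] d r] .
  then show ?thesis
    using bi r d by (simp add: dot_commute biorthD finsupp_residual)
qed

definition next_pair ::
  "('i \<Rightarrow> 'k::field) set \<Rightarrow> ('i \<Rightarrow> 'k) set \<Rightarrow> (nat \<Rightarrow> 'i \<Rightarrow> 'k) \<Rightarrow> (nat \<Rightarrow> 'i \<Rightarrow> 'k) \<Rightarrow> nat \<Rightarrow>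
    ('i \<Rightarrow> 'k) \<Rightarrow> ('i \<Rightarrow> 'k) \<times> ('i \<Rightarrow> 'k) \<times> bool" where
  "next_pair K L A B n v = (let a = residual A B n v in
     if a = (\<lambda>t. 0) then ((\<lambda>t. 0), (\<lambda>t. 0), True)
     else if a \<in> K then (a, residual B A n (SOME d. finsupp d \<and> dot a d = 1), True)
     else (a, residual B A n (SOME d. d \<in> L \<and> dot a d = 1), False))"

lemma next_pair_cong:
  "(\<And>s. s < n \<Longrightarrow> A s = A' s) \<Longrightarrow> (\<And>s. s < n \<Longrightarrow> B s = B' s) \<Longrightarrow>
    next_pair K L A B n v = next_pair K L A' B' n v"
proof -
  assume A: "\<And>s. s < n \<Longrightarrow> A s = A' s" and B: "\<And>s. s < n \<Longrightarrow> B s = B' s"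
  have "residual A B n v = residual A' B' n v" "\<And>d. residual B A n d = residual B' A' n d"
    by (rule residual_cong; simp add: A B)+
  then show ?thesis
    by (simp add: next_pair_def Let_def)
qed

lemma exists_dual_vector:
  assumes "finsupp a" "a \<noteq> (\<lambda>t. 0)"
  shows "\<exists>d. finsupp d \<and> dot a d = (1 :: 'k::field)"
proof -
  obtain t where t: "a t \<noteq> 0"
    using assms(2) by auto
  have "finsupp (\<lambda>s. inverse (a t) * delta t s) \<and> dot a (\<lambda>s. inverse (a t) * delta t s) = 1"
    using assms(1) t by (simp add: finsupp_scale dot_scale_right dot_delta_right)
  then show ?thesis
    by blast
qed

context dual_pair
begin

lemma next_pairE:
  assumes v: "finsupp v" and A: "\<And>s. s < n \<Longrightarrow> finsupp (A s)"
    and step: "next_pair K L A B n v = (a, b, c)"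
  obtains "residual A B n v = (\<lambda>t. 0)" "a = (\<lambda>t. 0)" "b = (\<lambda>t. 0)" "c"
  | d where "a = residual A B n v" "a \<noteq> (\<lambda>t. 0)" "finsupp d" "dot a d = 1"
    "b = residual B A n d" "c \<Longrightarrow> a \<in> K" "\<not> c \<Longrightarrow> d \<in> L"
proof -
  let ?a = "residual A B n v"
  have fin: "finsupp ?a"
    by (rule finsupp_residual[OF v A])
  consider "?a = (\<lambda>t. 0)" | "?a \<noteq> (\<lambda>t. 0)" "?a \<in> K" | "?a \<noteq> (\<lambda>t. 0)" "?a \<notin> K"
    by blast
  then show thesis
  proof cases
    case 1
    then have "next_pair K L A B n v = ((\<lambda>t. 0), (\<lambda>t. 0), True)"
      by (simp add: next_pair_def Let_def)
    with step have "a = (\<lambda>t. 0) \<and> b = (\<lambda>t. 0) \<and> c"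
      by (metis prod.inject)
    with 1 show thesis
      using that(1) by blast
  next
    case 2
    then have "\<exists>d. finsupp d \<and> dot ?a d = 1"
      using exists_dual_vector[OF fin] by blast
    define d where "d = (SOME d. finsupp d \<and> dot ?a d = 1)"
    have d: "finsupp d" "dot ?a d = 1"
      using someI_ex[OF \<open>\<exists>d. finsupp d \<and> dot ?a d = 1\<close>] by (simp_all add: d_def)
    have "next_pair K L A B n v = (?a, residual B A n d, True)"
      using 2 by (simp add: next_pair_def Let_def d_def)
    with step have "a = ?a \<and> b = residual B A n d \<and> c"
      by (metis prod.inject)
    then show thesis
      using that(2)[of d] 2 d by blast
  next
    case 3
    then have "\<exists>d. d \<in> L \<and> dot ?a d = 1"
      using K_separate[OF fin] by blast
    define d where "d = (SOME d. d \<in> L \<and> dot ?a d = 1)"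
    have d: "d \<in> L" "dot ?a d = 1"
      using someI_ex[OF \<open>\<exists>d. d \<in> L \<and> dot ?a d = 1\<close>] by (simp_all add: d_def)
    have "next_pair K L A B n v = (?a, residual B A n d, False)"
      using 3 by (simp add: next_pair_def Let_def d_def)
    with step have "a = ?a \<and> b = residual B A n d \<and> \<not> c"
      by (metis prod.inject)
    then show thesis
      using that(2)[of d] 3 d L_finsupp by blast
  qed
qed

lemma residual_in_L:
  assumes bi: "biorth K L A B T n" and d: "d \<in> L"
  shows "residual B A n d \<in> L"
proof -
  have "dot d (A s) = 0 \<or> B s \<in> L" if "s < n" for s
    using biorthD(4,5)[OF bi that] orthogonal[of "A s" d] d
      dot_commute[OF L_finsupp[OF d] biorthD(1)[OF bi that]] by auto
  then show ?thesis
    unfolding residual_def using d by (intro swapped.K_diff swapped.K_lincomb) auto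
qed

lemma biorth_Suc:
  assumes bi: "biorth K L A B T n" and v: "finsupp v"
    and step: "next_pair K L A B n v = (A n, B n, T n)"
  shows "biorth K L A B T (Suc n) \<and> v = (\<lambda>t. \<Sum>s<Suc n. dot v (B s) * A s t)"
proof -
  have A: "\<And>s. s < n \<Longrightarrow> finsupp (A s)" and B: "\<And>s. s < n \<Longrightarrow> finsupp (B s)"
    using biorthD[OF bi] by auto
  have expansion: "v = (\<lambda>t. (\<Sum>s<n. dot v (B s) * A s t) + residual A B n v t)"
    by (simp add: residual_def)
  show ?thesis
  proof (rule next_pairE[OF v A step])
    assume "residual A B n v = (\<lambda>t. 0)" "A n = (\<lambda>t. 0)" "B n = (\<lambda>t. 0)" "T n"
    then show ?thesis
      using bi K_zero expansion by (simp add: biorth_Suc_iff)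
  next
    fix d
    assume dual: "A n = residual A B n v" "A n \<noteq> (\<lambda>t. 0)" "finsupp d" "dot (A n) d = 1"
      "B n = residual B A n d" "T n \<Longrightarrow> A n \<in> K" "\<not> T n \<Longrightarrow> d \<in> L"
    have ortho: "dot (A n) (B r) = 0 \<and> dot (A r) (B n) = 0" if "r < n" for r
      using dual that dot_residual_left[OF bi v] dot_residual_right[OF bi] by simp
    have fin: "finsupp (A n)" "finsupp (B n)"
      using dual A B v by (simp_all add: finsupp_residual)
    have "dot (A n) (B n) = dot (A n) d - (\<Sum>s<n. dot d (A s) * dot (A n) (B s))"
      using dual by (simp add: residual_def dot_diff_right dot_lincomb_right)
    then have one: "dot (A n) (B n) = 1"
      using dual ortho by simp
    have "B n \<in> L" if "\<not> T n"
      using dual(5,7) that residual_in_L[OF bi] by simp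
    then have "biorth K L A B T (Suc n)"
      using bi fin one ortho dual by (auto simp: biorth_Suc_iff)
    moreover have "dot v (B n) = (\<Sum>s<n. dot v (B s) * dot (A s) (B n)) + dot (A n) (B n)"
      using dual fin by (subst expansion) (simp add: dot_add_left finsupp_lincomb A dot_lincomb_left)
    then have "dot v (B n) = 1"
      using one ortho by simp
    ultimately show ?thesis
      using dual expansion by simp
  qed
qed

end

locale biorth_basis = dual_pair K L for K L :: "('i::countable \<Rightarrow> 'k::field) set" +
  fixes A B :: "nat \<Rightarrow> 'i \<Rightarrow> 'k" and T :: "nat \<Rightarrow> bool"
  assumes biorth: "biorth K L A B T n"
    and delta_in_span_A: "\<exists>N. delta t = (\<lambda>u. \<Sum>s<N. B s t * A s u)"
    and delta_in_span_B: "\<exists>N. delta t = (\<lambda>u. \<Sum>s<N. A s t * B s u)"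
begin

lemma A_finsupp: "finsupp (A r)"
  and B_finsupp: "finsupp (B r)"
  and A_in_K: "T r \<Longrightarrow> A r \<in> K"
  and B_in_L: "\<not> T r \<Longrightarrow> B r \<in> L"
  using biorthD[OF biorth[of "Suc r"]] by auto

lemma dot_A_B: "r \<noteq> s \<Longrightarrow> dot (A r) (B s) = 0"
  using biorthD(6)[OF biorth[of "Suc (max r s)"]] by simp

lemma expansion_coeff_eq_0:
  assumes "w = (\<lambda>u. \<Sum>s<N. dot w (B s) * A s u)" "N \<le> r"
  shows "dot w (B r) = 0"
proof -
  have "dot w (B r) = (\<Sum>s<N. dot w (B s) * dot (A s) (B r))"
    by (subst assms(1)) (simp add: dot_lincomb_left A_finsupp)
  also have "\<dots> = 0"
    using assms(2) by (intro sum.neutral) (auto simp: dot_A_B)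
  finally show ?thesis .
qed

lemma finite_A_nonzero: "finite {r. A r t \<noteq> 0}"
proof -
  obtain N where N: "delta t = (\<lambda>u. \<Sum>s<N. A s t * B s u)"
    using delta_in_span_B by blast
  have "A r t = 0" if "N \<le> r" for r
  proof -
    have "A r t = dot (A r) (\<lambda>u. \<Sum>s<N. A s t * B s u)"
      by (simp flip: N add: dot_delta_right A_finsupp)
    also have "\<dots> = 0"
      using that by (simp add: dot_lincomb_right dot_A_B)
    finally show ?thesis .
  qed
  then have "{r. A r t \<noteq> 0} \<subseteq> {..<N}"
    by (auto simp: not_less[symmetric])
  then show ?thesis
    by (rule finite_subset) simp
qed

lemma delta_expansion_coeff_eq_0:
  assumes N: "delta t = (\<lambda>u. \<Sum>s<N. B s t * A s u)" and r: "N \<le> r"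
  shows "B r t = 0"
proof -
  have "delta t = (\<lambda>u. \<Sum>s<N. dot (delta t) (B s) * A s u)"
    unfolding dot_delta_left by (rule N)
  from expansion_coeff_eq_0[OF this r] show ?thesis
    unfolding dot_delta_left .
qed

lemma finite_B_nonzero: "finite {r. B r t \<noteq> 0}"
proof -
  obtain N where N: "delta t = (\<lambda>u. \<Sum>s<N. B s t * A s u)"
    using delta_in_span_A by blast
  have "{r. B r t \<noteq> 0} \<subseteq> {..<N}"
    using delta_expansion_coeff_eq_0[OF N] by (auto simp: not_less[symmetric])
  then show ?thesis
    by (rule finite_subset) simp
qed

lemma expansion_exists:
  assumes w: "finsupp w"
  shows "\<exists>N. w = (\<lambda>u. \<Sum>s<N. dot w (B s) * A s u)"
proof -
  define S where "S = {t. w t \<noteq> 0}"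
  define N where "N = Max (\<Union>t\<in>S. {r. B r t \<noteq> 0}) + 1"
  have S: "finite S"
    using w by (simp add: S_def finsupp_def)
  have N: "r < N" if "t \<in> S" "B r t \<noteq> 0" for r t
    using that S finite_B_nonzero unfolding N_def by (auto intro!: le_imp_less_Suc Max_ge)
  have delta: "delta t = (\<lambda>u. \<Sum>s<N. B s t * A s u)" if "t \<in> S" for t
  proof -
    obtain N' where N': "delta t = (\<lambda>u. \<Sum>s<N'. B s t * A s u)"
      using delta_in_span_A by blast
    have "(\<Sum>s<N'. B s t * A s u) = (\<Sum>s<N. B s t * A s u)" for u
      using N[OF that] delta_expansion_coeff_eq_0[OF N']
      by (intro sum.mono_neutral_cong) (auto simp: not_less[symmetric])
    then show ?thesis
      using N' by simp
  qed
  have "(\<Sum>s<N. dot w (B s) * A s u) = w u" for u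
  proof -
    have "(\<Sum>s<N. dot w (B s) * A s u) = (\<Sum>s<N. \<Sum>t\<in>S. w t * B s t * A s u)"
      by (simp add: dot_def S_def sum_distrib_right)
    also have "\<dots> = (\<Sum>t\<in>S. w t * delta t u)"
      by (subst sum.swap) (simp add: delta sum_distrib_left mult.assoc)
    also have "\<dots> = (\<Sum>t\<in>S. if t = u then w t else 0)"
      by (rule sum.cong) (auto simp: delta_def)
    also have "\<dots> = w u"
      using S by (simp add: S_def)
    finally show ?thesis .
  qed
  then show ?thesis
    by (intro exI[of _ N]) auto
qed

text \<open>The matrix of the projection onto \<open>K\<close> along the span of the \<open>A r\<close> with \<open>\<not> T r\<close>.\<close>

definition proj :: "'i \<Rightarrow> 'i \<Rightarrow> 'k" where
  "proj t s = (\<Sum>r | T r \<and> A r t \<noteq> 0. A r t * B r s)"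

lemma proj_row_finsupp: "finsupp (proj t)"
proof -
  have "{s. proj t s \<noteq> 0} \<subseteq> (\<Union>r\<in>{r. A r t \<noteq> 0}. {s. B r s \<noteq> 0})"
    unfolding proj_def by (auto elim!: sum.not_neutral_contains_not_neutral)
  then show ?thesis
    unfolding finsupp_def
    by (rule finite_subset) (use finite_A_nonzero B_finsupp in \<open>auto simp: finsupp_def\<close>)
qed

lemma dot_proj:
  assumes N: "w = (\<lambda>u. \<Sum>s<N. dot w (B s) * A s u)"
  shows "dot w (proj t) = (\<Sum>r<N. (if T r then dot w (B r) else 0) * A r t)"
proof -
  have "dot w (proj t) = (\<Sum>r | T r \<and> A r t \<noteq> 0. A r t * dot w (B r))"
    unfolding proj_def dot_def by (simp add: sum_distrib_left sum.swap[of _ "{t. w t \<noteq> 0}"] ac_simps)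
  also have "\<dots> = (\<Sum>r | T r \<and> A r t \<noteq> 0 \<and> r < N. A r t * dot w (B r))"
    using expansion_coeff_eq_0[OF N] finite_A_nonzero[of t]
    by (intro sum.mono_neutral_right) (auto simp: not_less[symmetric])
  also have "\<dots> = (\<Sum>r<N. (if T r then dot w (B r) else 0) * A r t)"
    by (intro sum.mono_neutral_cong_left) auto
  finally show ?thesis .
qed

lemma proj_in_K:
  assumes "finsupp w"
  shows "(\<lambda>t. dot w (proj t)) \<in> K"
proof -
  obtain N where N: "w = (\<lambda>u. \<Sum>s<N. dot w (B s) * A s u)"
    using expansion_exists[OF assms] by blast
  show ?thesis
    unfolding dot_proj[OF N] by (rule K_lincomb) (auto simp: A_in_K)
qed

lemma proj_fixes_K:
  assumes "w \<in> K"
  shows "(\<lambda>t. dot w (proj t)) = w"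
proof -
  obtain N where N: "w = (\<lambda>u. \<Sum>s<N. dot w (B s) * A s u)"
    using expansion_exists[OF K_finsupp[OF assms]] by blast
  have "dot w (B r) = 0" if "\<not> T r" for r
    using orthogonal[OF assms B_in_L[OF that]] .
  then have "(\<lambda>t. dot w (proj t)) = (\<lambda>u. \<Sum>s<N. dot w (B s) * A s u)"
    unfolding dot_proj[OF N] by (auto intro!: sum.cong)
  then show ?thesis
    using N by simp
qed

end

text \<open>Even steps bring the basis vector \<open>delta (from_nat (n div 2))\<close> into the span of the
  \<open>A r\<close>, odd steps (with the roles of \<open>K\<close> and \<open>L\<close> exchanged) into the span of the \<open>B r\<close>.\<close>

definition pair_step ::
  "('i::countable \<Rightarrow> 'k::field) set \<Rightarrow> ('i \<Rightarrow> 'k) set \<Rightarrow> nat \<Rightarrow>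
    (nat \<Rightarrow> ('i \<Rightarrow> 'k) \<times> ('i \<Rightarrow> 'k) \<times> bool) \<Rightarrow> ('i \<Rightarrow> 'k) \<times> ('i \<Rightarrow> 'k) \<times> bool" where
  "pair_step K L n S =
    (let A = (\<lambda>s. fst (S s)); B = (\<lambda>s. fst (snd (S s))); v = delta (from_nat (n div 2)) in
     if even n then next_pair K L A B n v
     else (case next_pair L K B A n v of (b, a, c) \<Rightarrow> (a, b, \<not> c)))"

primrec pair_seq ::
  "('i::countable \<Rightarrow> 'k::field) set \<Rightarrow> ('i \<Rightarrow> 'k) set \<Rightarrow> nat \<Rightarrow> nat \<Rightarrow> ('i \<Rightarrow> 'k) \<times> ('i \<Rightarrow> 'k) \<times> bool"
  where
    "pair_seq K L 0 = (\<lambda>r. ((\<lambda>t. 0), (\<lambda>t. 0), True))"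
  | "pair_seq K L (Suc n) = (pair_seq K L n)(n := pair_step K L n (pair_seq K L n))"

lemma pair_seq_stable: "r < n \<Longrightarrow> pair_seq K L n r = pair_seq K L (Suc r) r"
  by (induction n) (auto simp: less_Suc_eq)

context dual_pair
begin

definition seq_A :: "nat \<Rightarrow> 'i \<Rightarrow> 'k" where "seq_A r = fst (pair_seq K L (Suc r) r)"
definition seq_B :: "nat \<Rightarrow> 'i \<Rightarrow> 'k" where "seq_B r = fst (snd (pair_seq K L (Suc r) r))"
definition seq_T :: "nat \<Rightarrow> bool" where "seq_T r = snd (snd (pair_seq K L (Suc r) r))"

lemma seq_step:
  "(seq_A n, seq_B n, seq_T n) = (if even n then next_pair K L seq_A seq_B n (delta (from_nat (n div 2)))
    else (case next_pair L K seq_B seq_A n (delta (from_nat (n div 2))) of (b, a, c) \<Rightarrow> (a, b, \<not> c)))"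
proof -
  have "next_pair K' L' (\<lambda>s. fst (pair_seq K L n s)) (\<lambda>s. fst (snd (pair_seq K L n s))) n w =
      next_pair K' L' seq_A seq_B n w"
    "next_pair K' L' (\<lambda>s. fst (snd (pair_seq K L n s))) (\<lambda>s. fst (pair_seq K L n s)) n w =
      next_pair K' L' seq_B seq_A n w" for K' L' w
    by (rule next_pair_cong; simp add: seq_A_def seq_B_def pair_seq_stable)+
  then show ?thesis
    by (simp only: seq_A_def seq_B_def seq_T_def pair_seq.simps fun_upd_same prod.collapse
        pair_step_def Let_def)
qed

lemma seq_biorth_expansion:
  "biorth K L seq_A seq_B seq_T (Suc n) \<and>
    (if even n then delta (from_nat (n div 2)) = (\<lambda>u. \<Sum>s<Suc n. seq_B s (from_nat (n div 2)) * seq_A s u)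
     else delta (from_nat (n div 2)) = (\<lambda>u. \<Sum>s<Suc n. seq_A s (from_nat (n div 2)) * seq_B s u))"
proof (induction n)
  case 0
  then show ?case
    using biorth_Suc[of seq_A seq_B seq_T 0 "delta (from_nat 0)"] seq_step[of 0]
    by (simp add: biorth_def dot_delta_left)
next
  case (Suc n)
  then have bi: "biorth K L seq_A seq_B seq_T (Suc n)"
    by blast
  show ?case
  proof (cases "even (Suc n)")
    case True
    then have "next_pair K L seq_A seq_B (Suc n) (delta (from_nat (Suc n div 2))) =
      (seq_A (Suc n), seq_B (Suc n), seq_T (Suc n))"
      using seq_step[of "Suc n"] by simp
    then have "biorth K L seq_A seq_B seq_T (Suc (Suc n)) \<and> delta (from_nat (Suc n div 2)) =
      (\<lambda>u. \<Sum>s<Suc (Suc n). dot (delta (from_nat (Suc n div 2))) (seq_B s) * seq_A s u)"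
      by (rule biorth_Suc[OF bi finsupp_delta])
    with True show ?thesis
      by (simp add: dot_delta_left del: sum.lessThan_Suc)
  next
    case False
    have "biorth L K seq_B seq_A (\<lambda>r. \<not> seq_T r) (Suc n)"
      using bi by (simp flip: biorth_swap)
    moreover have "next_pair L K seq_B seq_A (Suc n) (delta (from_nat (Suc n div 2))) =
      (seq_B (Suc n), seq_A (Suc n), \<not> seq_T (Suc n))"
      using seq_step[of "Suc n"] False by (auto split: prod.splits)
    ultimately have "biorth L K seq_B seq_A (\<lambda>r. \<not> seq_T r) (Suc (Suc n)) \<and>
      delta (from_nat (Suc n div 2)) =
      (\<lambda>u. \<Sum>s<Suc (Suc n). dot (delta (from_nat (Suc n div 2))) (seq_A s) * seq_B s u)"
      by (rule swapped.biorth_Suc[OF _ finsupp_delta])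
    with False show ?thesis
      by (simp add: biorth_swap[of K L] dot_delta_left del: sum.lessThan_Suc)
  qed
qed

lemma biorth_basis_exists: "biorth_basis K L seq_A seq_B seq_T"
proof
  fix n show "biorth K L seq_A seq_B seq_T n"
    using seq_biorth_expansion[of n] biorth_Suc_iff by blast
next
  fix t
  have "delta t = (\<lambda>u. \<Sum>s<Suc (2 * to_nat t). seq_B s t * seq_A s u)"
    using seq_biorth_expansion[of "2 * to_nat t"] by (simp del: sum.lessThan_Suc)
  then show "\<exists>N. delta t = (\<lambda>u. \<Sum>s<N. seq_B s t * seq_A s u)"
    by blast
  have "delta t = (\<lambda>u. \<Sum>s<Suc (Suc (2 * to_nat t)). seq_A s t * seq_B s u)"
    using seq_biorth_expansion[of "Suc (2 * to_nat t)"] by (simp del: sum.lessThan_Suc)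
  then show "\<exists>N. delta t = (\<lambda>u. \<Sum>s<N. seq_A s t * seq_B s u)"
    by blast
qed

end

section \<open>Projections onto annihilators\<close>

definition annihilator :: "('a \<Rightarrow> 'i \<Rightarrow> 'k::comm_ring) \<Rightarrow> ('i \<Rightarrow> 'k) set" where
  "annihilator \<rho> = {w. finsupp w \<and> (\<forall>\<alpha>. dot (\<rho> \<alpha>) w = 0)}"

lemma dual_pair_annihilator:
  fixes \<rho> :: "'a \<Rightarrow> 'i::countable \<Rightarrow> 'k::field"
  assumes \<rho>: "\<And>\<alpha>. finsupp (\<rho> \<alpha>)"
  shows "dual_pair (annihilator \<rho>) {y. finsupp y \<and> (\<forall>x\<in>annihilator \<rho>. dot x y = 0)}"
proof
  fix v assume v: "finsupp v" "v \<notin> annihilator \<rho>"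
  then obtain \<alpha> where \<alpha>: "dot (\<rho> \<alpha>) v \<noteq> 0"
    by (auto simp: annihilator_def)
  define y where "y = (\<lambda>t. inverse (dot (\<rho> \<alpha>) v) * \<rho> \<alpha> t)"
  have "dot x y = 0" if "x \<in> annihilator \<rho>" for x
    using that dot_commute[OF _ \<rho>, of x \<alpha>] by (simp add: annihilator_def y_def dot_scale_right)
  moreover have "dot v y = 1"
    using \<alpha> dot_commute[OF v(1) \<rho>] by (simp add: y_def dot_scale_right)
  moreover have "finsupp y"
    unfolding y_def by (rule finsupp_scale[OF \<rho>])
  ultimately show "\<exists>y\<in>{y. finsupp y \<and> (\<forall>x\<in>annihilator \<rho>. dot x y = 0)}. dot v y = 1"
    by blast
next
  fix w assume w: "finsupp w" "w \<notin> {y. finsupp y \<and> (\<forall>x\<in>annihilator \<rho>. dot x y = 0)}"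
  then obtain x where x: "x \<in> annihilator \<rho>" "dot x w \<noteq> 0"
    by auto
  define x' where "x' = (\<lambda>t. inverse (dot x w) * x t)"
  have "x' \<in> annihilator \<rho>"
    using x by (simp add: annihilator_def x'_def finsupp_scale dot_scale_right)
  moreover have "dot w x' = 1"
    using x w dot_commute[OF w(1), of x] by (simp add: annihilator_def x'_def dot_scale_right)
  ultimately show "\<exists>x\<in>annihilator \<rho>. dot w x = 1"
    by blast
qed (auto simp: annihilator_def finsupp_add finsupp_scale dot_add_right dot_scale_right)

theorem annihilator_projection:
  fixes \<rho> :: "'a \<Rightarrow> 'i::countable \<Rightarrow> 'k::field"
  assumes \<rho>: "\<And>\<alpha>. finsupp (\<rho> \<alpha>)"
  defines "K \<equiv> annihilator \<rho>"
  obtains P where "\<And>t. finsupp (P t)" "\<And>w. finsupp w \<Longrightarrow> (\<lambda>t. dot w (P t)) \<in> K" "\<And>w. w \<in> K \<Longrightarrow> (\<lambda>t. dot w (P t)) = w"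
proof -
  interpret dual_pair K "{y. finsupp y \<and> (\<forall>x\<in>K. dot x y = 0)}"
    unfolding K_def by (rule dual_pair_annihilator[OF \<rho>])
  interpret biorth_basis K "{y. finsupp y \<and> (\<forall>x\<in>K. dot x y = 0)}" seq_A seq_B seq_T
    by (rule biorth_basis_exists)
  show thesis
    using proj_row_finsupp proj_in_K proj_fixes_K by (rule that)
qed

section \<open>Kernels of homomorphisms between free RCFM-modules\<close>

lemma rcfm_free_simps:
  fixes v w :: "nat \<Rightarrow> nat \<Rightarrow> nat \<Rightarrow> 'k::field"
  shows "v \<in> carrier (free_rmod RCFM m) \<longleftrightarrow> (\<forall>j<m. v j \<in> carrier RCFM) \<and> (\<forall>j\<ge>m. v j = (\<lambda>a c. 0))"
    and "\<zero>\<^bsub>free_rmod RCFM m\<^esub> = (\<lambda>j a c. 0 :: 'k)"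
    and "v \<oplus>\<^bsub>free_rmod RCFM m\<^esub> w = (\<lambda>j. if j < m then (\<lambda>a c. v j a c + w j a c) else (\<lambda>a c. 0))"
    and "rsmult (free_rmod RCFM m) v r =
      (\<lambda>j. if j < m then (\<lambda>a c. dot (v j a) (\<lambda>l. r l c)) else (\<lambda>a c. 0))"
  by (simp_all add: free_rmod_simps rcfm_simps(1,3,4) rcfm_mult_dot cong: if_cong)

lemma rcfm_lsum: "lsum (RCFM :: (nat \<Rightarrow> nat \<Rightarrow> 'k::field) ring) g k = (\<lambda>a c. \<Sum>j<k. g j a c)"
  by (induction k) (simp_all add: rcfm_simps)

text \<open>An element of \<open>RCFM\<^sup>m\<close> is a matrix with rows indexed by \<open>{..<m} \<times> \<nat>\<close>; these are its
  columns.\<close>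

definition column :: "(nat \<Rightarrow> nat \<Rightarrow> nat \<Rightarrow> 'k) \<Rightarrow> nat \<Rightarrow> nat \<times> nat \<Rightarrow> 'k" where
  "column v c = (\<lambda>(j, b). v j b c)"

lemma finsupp_column:
  assumes "v \<in> carrier (free_rmod RCFM m)"
  shows "finsupp (column v c :: nat \<times> nat \<Rightarrow> 'k::field)"
proof -
  have "{p. column v c p \<noteq> 0} \<subseteq> {..<m} \<times> (\<Union>j<m. {b. v j b c \<noteq> 0})"
    using assms by (auto simp: column_def rcfm_free_simps not_less[symmetric])
  moreover have "finite ({..<m} \<times> (\<Union>j<m. {b. v j b c \<noteq> 0}))"
    using assms by (auto simp: rcfm_free_simps rcfm_carrier_iff finsupp_def)
  ultimately show ?thesis
    unfolding finsupp_def by (rule finite_subset)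
qed

lemma finsupp_free_rcfm_row:
  "v \<in> carrier (free_rmod RCFM m) \<Longrightarrow> finsupp (v j b :: nat \<Rightarrow> 'k::field)"
  by (cases "j < m") (auto simp: rcfm_free_simps rcfm_carrier_iff)

lemma column_add:
  "v \<in> carrier (free_rmod RCFM m) \<Longrightarrow> w \<in> carrier (free_rmod RCFM m) \<Longrightarrow>
    column (v \<oplus>\<^bsub>free_rmod RCFM m\<^esub> w) c = (\<lambda>p. column v c p + column w c p :: 'k::field)"
  by (auto simp: column_def rcfm_free_simps fun_eq_iff)

lemma column_rsmult:
  assumes "v \<in> carrier (free_rmod RCFM m)"
  shows "column (rsmult (free_rmod RCFM m) v r) c = (\<lambda>(j, b). dot (v j b) (\<lambda>l. r l c :: 'k::field))"
proof -
  have outside: "v j = (\<lambda>a c. 0)" if "\<not> j < m" for j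
    using assms that by (simp add: rcfm_free_simps)
  show ?thesis
    by (auto simp: column_def rcfm_free_simps outside)
qed

text \<open>The kernel of \<open>f : RCFM\<^sup>m \<rightarrow> RCFM\<^sup>n\<close> consists of those \<open>v\<close> all of whose columns are
  annihilated by the rows of the matrix of \<open>f\<close> (indexed by \<open>Inl\<close>) and by the coordinate
  functionals outside \<open>{..<m} \<times> \<nat>\<close> (indexed by \<open>Inr\<close>).\<close>

definition hom_rows ::
  "nat \<Rightarrow> nat \<Rightarrow> ((nat \<Rightarrow> nat \<Rightarrow> nat \<Rightarrow> 'k) \<Rightarrow> nat \<Rightarrow> nat \<Rightarrow> nat \<Rightarrow> 'k) \<Rightarrow>
    (nat \<times> nat) + (nat \<times> nat) \<Rightarrow> nat \<times> nat \<Rightarrow> 'k::field" where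
  "hom_rows m n f \<alpha> = (case \<alpha> of
      Inl (i, a) \<Rightarrow> (\<lambda>(j, b). if i < n \<and> j < m then f (free_unit RCFM j) i a b else 0)
    | Inr p \<Rightarrow> if m \<le> fst p then delta p else (\<lambda>_. 0))"

lemma hom_entry_closed:
  assumes f: "f \<in> rhom RCFM (free_rmod RCFM m) (free_rmod (RCFM :: (nat \<Rightarrow> nat \<Rightarrow> 'k::field) ring) n)"
    and "j < m" "i < n"
  shows "f (free_unit RCFM j) i \<in> carrier (RCFM :: (nat \<Rightarrow> nat \<Rightarrow> 'k) ring)"
proof -
  have "f (free_unit RCFM j) \<in> carrier (free_rmod (RCFM :: (nat \<Rightarrow> nat \<Rightarrow> 'k) ring) n)"
    using f free_unit_closed[OF ring_RCFM \<open>j < m\<close>] by (auto simp: rhom_def)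
  then show ?thesis
    using \<open>i < n\<close> by (simp add: free_rmod_simps)
qed

lemma finsupp_hom_rows:
  assumes f: "f \<in> rhom RCFM (free_rmod RCFM m) (free_rmod (RCFM :: (nat \<Rightarrow> nat \<Rightarrow> 'k::field) ring) n)"
  shows "finsupp (hom_rows m n f \<alpha>)"
proof (cases \<alpha>)
  case (Inl ia)
  obtain i a where ia: "ia = (i, a)"
    by (cases ia)
  have "{p. hom_rows m n f \<alpha> p \<noteq> 0} \<subseteq> {..<m} \<times> (\<Union>j<m. {b. f (free_unit RCFM j) i a b \<noteq> 0})"
    by (auto simp: hom_rows_def Inl ia split: if_splits)
  moreover have "finite ({..<m} \<times> (\<Union>j<m. {b. f (free_unit RCFM j) i a b \<noteq> 0}))" if "i < n"
    using hom_entry_closed[OF f _ that] by (auto simp: rcfm_carrier_iff finsupp_def)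
  ultimately show ?thesis
    by (cases "i < n") (auto simp: finsupp_def hom_rows_def Inl ia intro: finite_subset)
qed (auto simp: hom_rows_def)

lemma hom_apply_eq_dot:
  assumes f: "f \<in> rhom RCFM (free_rmod RCFM m) (free_rmod (RCFM :: (nat \<Rightarrow> nat \<Rightarrow> 'k::field) ring) n)"
    and v: "v \<in> carrier (free_rmod RCFM m)" and i: "i < n"
  shows "f v i a c = dot (hom_rows m n f (Inl (i, a))) (column v c)"
proof -
  let ?R = "RCFM :: (nat \<Rightarrow> nat \<Rightarrow> 'k) ring"
  let ?F = "free_rmod ?R m" and ?G = "free_rmod ?R n"
  interpret f: abelian_group_hom ?F ?G f
    by (rule rhom_abelian_group_hom[OF free_right_module free_right_module f]) (rule ring_RCFM)+
  have vj: "\<And>j. j < m \<Longrightarrow> v j \<in> carrier ?R"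
    using v by (simp add: free_rmod_simps)
  have "f v = lsum ?G (\<lambda>j. f (rsmult ?F (free_unit ?R j) (v j))) m"
    by (subst free_rmod_expansion[OF ring_RCFM v], rule f.hom_lsum)
      (simp add: rsmult_closed[OF free_right_module[OF ring_RCFM]] free_unit_closed[OF ring_RCFM] vj)
  also have "\<dots> = lsum ?G (\<lambda>j. rsmult ?G (f (free_unit ?R j)) (v j)) m"
    by (rule lsum_cong) (simp add: rhom_rsmult[OF f] free_unit_closed[OF ring_RCFM] vj)
  finally have "f v i a c = (\<Sum>j<m. dot (f (free_unit ?R j) i a) (\<lambda>b. v j b c))"
    using i by (simp add: lsum_free_rmod_apply free_rmod_simps rcfm_lsum rcfm_mult_dot)
  also have "\<dots> = dot (hom_rows m n f (Inl (i, a))) (column v c)"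
  proof -
    define U where "U = (\<Union>j<m. {b. f (free_unit ?R j) i a b \<noteq> 0})"
    have U: "finite U"
      using hom_entry_closed[OF f _ i] by (auto simp: U_def rcfm_carrier_iff finsupp_def)
    have "dot (hom_rows m n f (Inl (i, a))) (column v c) =
      (\<Sum>p\<in>{..<m} \<times> U. hom_rows m n f (Inl (i, a)) p * column v c p)"
      using U by (intro dot_eq_sum_left finsupp_hom_rows[OF f]) (auto simp: hom_rows_def U_def split: if_splits)
    also have "\<dots> = (\<Sum>(j, b)\<in>{..<m} \<times> U. f (free_unit ?R j) i a b * v j b c)"
      using i by (intro sum.cong refl) (auto simp: hom_rows_def column_def)
    also have "\<dots> = (\<Sum>j<m. dot (f (free_unit ?R j) i a) (\<lambda>b. v j b c))"
      unfolding sum.cartesian_product[symmetric] using U hom_entry_closed[OF f _ i]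
      by (intro sum.cong refl dot_eq_sum_left[symmetric]) (auto simp: U_def rcfm_carrier_iff)
    finally show ?thesis ..
  qed
  finally show ?thesis .
qed

lemma dot_hom_rows_Inl:
  assumes f: "f \<in> rhom RCFM (free_rmod RCFM m) (free_rmod (RCFM :: (nat \<Rightarrow> nat \<Rightarrow> 'k::field) ring) n)"
    and v: "v \<in> carrier (free_rmod RCFM m)"
  shows "dot (hom_rows m n f (Inl (i, a))) (column v c) = (if i < n then f v i a c else 0)"
proof (cases "i < n")
  case False
  then have "hom_rows m n f (Inl (i, a)) = (\<lambda>_. 0)"
    by (auto simp: hom_rows_def)
  with False show ?thesis
    by simp
qed (simp add: hom_apply_eq_dot[OF f v])

lemma dot_hom_rows_Inr:
  "v \<in> carrier (free_rmod RCFM m) \<Longrightarrow> dot (hom_rows m n f (Inr p)) (column v c) = (0 :: 'k::field)"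
  by (cases p) (auto simp: hom_rows_def dot_delta_left column_def rcfm_free_simps)

lemma hom_eq_0_iff_columns:
  assumes f: "f \<in> rhom RCFM (free_rmod RCFM m) (free_rmod (RCFM :: (nat \<Rightarrow> nat \<Rightarrow> 'k::field) ring) n)"
    and v: "v \<in> carrier (free_rmod RCFM m)"
  shows "f v = \<zero>\<^bsub>free_rmod RCFM n\<^esub> \<longleftrightarrow> (\<forall>c. column v c \<in> annihilator (hom_rows m n f))"
proof -
  have "f v \<in> carrier (free_rmod RCFM n)"
    using f v by (auto simp: rhom_def)
  then have "f v = \<zero>\<^bsub>free_rmod RCFM n\<^esub> \<longleftrightarrow> (\<forall>i<n. \<forall>a c. f v i a c = 0)"
    by (auto simp: rcfm_free_simps fun_eq_iff) (meson not_le)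
  also have "\<dots> \<longleftrightarrow> (\<forall>c \<alpha>. dot (hom_rows m n f \<alpha>) (column v c) = 0)"
  proof
    assume zero: "\<forall>i<n. \<forall>a c. f v i a c = 0"
    show "\<forall>c \<alpha>. dot (hom_rows m n f \<alpha>) (column v c) = 0"
    proof (intro allI)
      fix c \<alpha>
      show "dot (hom_rows m n f \<alpha>) (column v c) = 0"
        using zero by (cases \<alpha>) (auto simp: dot_hom_rows_Inl[OF f v] dot_hom_rows_Inr[OF v])
    qed
  next
    assume "\<forall>c \<alpha>. dot (hom_rows m n f \<alpha>) (column v c) = 0"
    then show "\<forall>i<n. \<forall>a c. f v i a c = 0"
      using dot_hom_rows_Inl[OF f v] by (metis (full_types))
  qed
  finally show ?thesis
    using finsupp_column[OF v] by (auto simp: annihilator_def)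
qed

locale column_projection =
  fixes m :: nat and K :: "(nat \<times> nat \<Rightarrow> 'k::field) set" and P :: "nat \<times> nat \<Rightarrow> nat \<times> nat \<Rightarrow> 'k"
  assumes P_row: "finsupp (P p)"
    and P_into: "finsupp w \<Longrightarrow> (\<lambda>p. dot w (P p)) \<in> K"
    and P_fixes: "w \<in> K \<Longrightarrow> (\<lambda>p. dot w (P p)) = w"
    and K_finsupp: "w \<in> K \<Longrightarrow> finsupp w"
    and K_outside: "w \<in> K \<Longrightarrow> m \<le> j \<Longrightarrow> w (j, b) = 0"
begin

abbreviation F where "F \<equiv> free_rmod (RCFM :: (nat \<Rightarrow> nat \<Rightarrow> 'k) ring) m"

definition compl_proj :: "(nat \<Rightarrow> nat \<Rightarrow> nat \<Rightarrow> 'k) \<Rightarrow> nat \<Rightarrow> nat \<Rightarrow> nat \<Rightarrow> 'k" where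
  "compl_proj v = (\<lambda>j. if j < m then (\<lambda>b c. v j b c - dot (column v c) (P (j, b))) else (\<lambda>b c. 0))"

lemma finsupp_dot_columns:
  assumes v: "v \<in> carrier F"
  shows "finsupp (\<lambda>c. dot (column v c) (P p))"
proof -
  have "{c. dot (column v c) (P p) \<noteq> 0} \<subseteq> (\<Union>(j, b)\<in>{q. P p q \<noteq> 0}. {c. v j b c \<noteq> 0})"
    by (auto simp: column_def elim!: dot_neq_zeroE)
  moreover have "finite (\<Union>(j, b)\<in>{q. P p q \<noteq> 0}. {c. v j b c \<noteq> 0})"
    using P_row finsupp_free_rcfm_row[OF v] by (auto simp: finsupp_def)
  ultimately show ?thesis
    unfolding finsupp_def by (rule finite_subset)
qed

lemma column_compl_proj:
  assumes v: "v \<in> carrier F"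
  shows "column (compl_proj v) c = (\<lambda>p. column v c p - dot (column v c) (P p))"
proof -
  have "dot (column v c) (P (j, b)) = 0" if "m \<le> j" for j b
    using K_outside[OF P_into[OF finsupp_column[OF v]] that] by simp
  then show ?thesis
    using v by (auto simp: column_def compl_proj_def rcfm_free_simps fun_eq_iff)
qed

lemma compl_proj_closed:
  assumes v: "v \<in> carrier F"
  shows "compl_proj v \<in> carrier F"
proof -
  have "compl_proj v j \<in> carrier RCFM" if "j < m" for j
  proof -
    have "finsupp (\<lambda>b. dot (column v c) (P (j, b)))" for c
    proof -
      have "finsupp (\<lambda>p. dot (column v c) (P p))"
        by (rule K_finsupp[OF P_into[OF finsupp_column[OF v]]])
      moreover have "{b. dot (column v c) (P (j, b)) \<noteq> 0} \<subseteq> snd ` {p. dot (column v c) (P p) \<noteq> 0}"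
        by force
      ultimately show ?thesis
        unfolding finsupp_def by (meson finite_imageI finite_subset)
    qed
    then show ?thesis
      using v that finsupp_dot_columns[OF v]
      by (auto simp: compl_proj_def rcfm_carrier_iff rcfm_free_simps intro!: finsupp_diff)
  qed
  then show ?thesis
    by (simp add: rcfm_free_simps compl_proj_def)
qed

lemma compl_proj_add:
  assumes v: "v \<in> carrier F" and w: "w \<in> carrier F"
  shows "compl_proj (v \<oplus>\<^bsub>F\<^esub> w) = compl_proj v \<oplus>\<^bsub>F\<^esub> compl_proj w"
  using v w unfolding compl_proj_def column_add[OF v w]
  by (simp add: dot_add_left finsupp_column rcfm_free_simps fun_eq_iff)

text \<open>Both sides are the finite triple sum \<open>\<Sum>q l. v\<^sub>q\<^sub>l r\<^sub>l\<^sub>c P\<^sub>p\<^sub>q\<close>.\<close>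

lemma dot_column_rsmult:
  assumes v: "v \<in> carrier F" and r: "r \<in> carrier RCFM"
  shows "dot (column (rsmult F v r) c) (P p) = dot (\<lambda>l. dot (column v l) (P p)) (\<lambda>l. r l c)"
proof -
  have vr: "rsmult F v r \<in> carrier F"
    by (rule rsmult_closed[OF free_right_module[OF ring_RCFM] v r])
  have "dot (column (rsmult F v r) c) (P p) = dot (P p) (\<lambda>(j, b). dot (v j b) (\<lambda>l. r l c))"
    using finsupp_column[OF vr] by (simp add: dot_commute P_row flip: column_rsmult[OF v])
  also have "\<dots> = dot (\<lambda>l. dot (P p) (column v l)) (\<lambda>l. r l c)"
    using dot_swap[OF P_row, where X="\<lambda>(j, b). v j b" and y="\<lambda>l. r l c"] finsupp_free_rcfm_row[OF v]
    by (simp add: case_prod_beta' column_def split_beta)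
  also have "\<dots> = dot (\<lambda>l. dot (column v l) (P p)) (\<lambda>l. r l c)"
    by (simp add: dot_commute P_row finsupp_column[OF v])
  finally show ?thesis .
qed

lemma compl_proj_rsmult:
  assumes v: "v \<in> carrier F" and r: "r \<in> carrier RCFM"
  shows "compl_proj (rsmult F v r) = rsmult F (compl_proj v) r"
proof (intro ext)
  fix j b c
  show "compl_proj (rsmult F v r) j b c = rsmult F (compl_proj v) r j b c"
  proof (cases "j < m")
    case True
    then have "compl_proj (rsmult F v r) j b c =
      dot (v j b) (\<lambda>l. r l c) - dot (\<lambda>l. dot (column v l) (P (j, b))) (\<lambda>l. r l c)"
      unfolding compl_proj_def dot_column_rsmult[OF v r] by (simp add: rcfm_free_simps)
    also have "\<dots> = dot (compl_proj v j b) (\<lambda>l. r l c)"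
      using True
      by (simp add: compl_proj_def dot_diff_left finsupp_free_rcfm_row[OF v] finsupp_dot_columns[OF v])
    also have "\<dots> = rsmult F (compl_proj v) r j b c"
      using True by (simp add: rcfm_free_simps)
    finally show ?thesis .
  qed (simp add: compl_proj_def rcfm_free_simps)
qed

lemma compl_proj_idem:
  assumes v: "v \<in> carrier F"
  shows "compl_proj (compl_proj v) = compl_proj v"
proof -
  have "dot (column (compl_proj v) c) (P p) = 0" for c p
  proof -
    let ?w = "column v c"
    have Pw: "(\<lambda>q. dot ?w (P q)) \<in> K"
      by (rule P_into[OF finsupp_column[OF v]])
    have "dot (column (compl_proj v) c) (P p) = dot ?w (P p) - dot (\<lambda>q. dot ?w (P q)) (P p)"
      by (simp add: column_compl_proj[OF v] dot_diff_left finsupp_column[OF v] K_finsupp[OF Pw])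
    also have "\<dots> = 0"
      using fun_cong[OF P_fixes[OF Pw], of p] by simp
    finally show ?thesis .
  qed
  then show ?thesis
    by (simp add: compl_proj_def[of "compl_proj v"] column_def fun_eq_iff)
      (simp add: compl_proj_def)
qed

lemma compl_proj_eq_0_iff:
  assumes v: "v \<in> carrier F"
  shows "compl_proj v = \<zero>\<^bsub>F\<^esub> \<longleftrightarrow> (\<forall>c. column v c \<in> K)"
proof -
  have "compl_proj v = \<zero>\<^bsub>F\<^esub> \<longleftrightarrow> (\<forall>c. column (compl_proj v) c = (\<lambda>p. 0))"
    using compl_proj_closed[OF v] by (auto simp: column_def rcfm_free_simps fun_eq_iff)
  also have "\<dots> \<longleftrightarrow> (\<forall>c. column v c = (\<lambda>p. dot (column v c) (P p)))"
    by (simp add: column_compl_proj[OF v] fun_eq_iff)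
  also have "\<dots> \<longleftrightarrow> (\<forall>c. column v c \<in> K)"
    using P_into[OF finsupp_column[OF v]] P_fixes by metis
  finally show ?thesis .
qed

end

theorem rcfm_kernel_summand:
  fixes f :: "(nat \<Rightarrow> nat \<Rightarrow> nat \<Rightarrow> 'k::field) \<Rightarrow> nat \<Rightarrow> nat \<Rightarrow> nat \<Rightarrow> 'k"
  assumes f: "f \<in> rhom RCFM (free_rmod RCFM m) (free_rmod RCFM n)"
  obtains E where "E \<in> rhom RCFM (free_rmod RCFM m) (free_rmod RCFM m)"
    "\<And>v. v \<in> carrier (free_rmod RCFM m) \<Longrightarrow> E (E v) = E v"
    "\<And>v. v \<in> carrier (free_rmod RCFM m) \<Longrightarrow> E v = \<zero>\<^bsub>free_rmod RCFM m\<^esub> \<longleftrightarrow> f v = \<zero>\<^bsub>free_rmod RCFM n\<^esub>"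
proof -
  obtain P where P: "\<And>p. finsupp (P p)" "\<And>w. finsupp w \<Longrightarrow> (\<lambda>p. dot w (P p)) \<in> annihilator (hom_rows m n f)"
    "\<And>w. w \<in> annihilator (hom_rows m n f) \<Longrightarrow> (\<lambda>p. dot w (P p)) = w"
    using annihilator_projection[of "hom_rows m n f", OF finsupp_hom_rows[OF f]] by metis
  interpret column_projection m "annihilator (hom_rows m n f)" P
  proof
    fix w j b assume "w \<in> annihilator (hom_rows m n f)" "m \<le> j"
    then have "dot (hom_rows m n f (Inr (j, b))) w = 0" "hom_rows m n f (Inr (j, b)) = delta (j, b)"
      by (simp_all add: annihilator_def) (simp add: hom_rows_def)
    then show "w (j, b) = 0"
      by (simp add: dot_delta_left)
  qed (use P in \<open>auto simp: annihilator_def\<close>)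
  show thesis
  proof (rule that[of compl_proj])
    show "compl_proj \<in> rhom RCFM (free_rmod RCFM m) (free_rmod RCFM m)"
      by (auto simp: rhom_def compl_proj_closed compl_proj_add compl_proj_rsmult)
  qed (simp_all add: compl_proj_idem compl_proj_eq_0_iff hom_eq_0_iff_columns[OF f])
qed

theorem corollary7p16:
  fixes M :: "('m, nat \<Rightarrow> nat \<Rightarrow> 'k::field) rmodule"
  assumes "right_module (RCFM :: (nat \<Rightarrow> nat \<Rightarrow> 'k) ring) M"
      and "finitely_presented (RCFM :: (nat \<Rightarrow> nat \<Rightarrow> 'k) ring) M"
  shows "proj_dim_le1 (RCFM :: (nat \<Rightarrow> nat \<Rightarrow> 'k) ring) M
           TYPE(nat \<Rightarrow> nat \<Rightarrow> nat \<Rightarrow> 'k) TYPE('b)"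
proof -
  let ?R = "RCFM :: (nat \<Rightarrow> nat \<Rightarrow> 'k) ring"
  obtain n m f g where f: "f \<in> rhom ?R (free_rmod ?R m) (free_rmod ?R n)"
    and g: "g \<in> rhom ?R (free_rmod ?R n) M" "g ` carrier (free_rmod ?R n) = carrier M"
    and f_image: "f ` carrier (free_rmod ?R m) = rkernel (free_rmod ?R n) M g"
    using assms(2) unfolding finitely_presented_def by (elim exE conjE) (rule that; assumption)
  obtain E where E: "E \<in> rhom ?R (free_rmod ?R m) (free_rmod ?R m)"
    and idem: "\<And>v. v \<in> carrier (free_rmod ?R m) \<Longrightarrow> E (E v) = E v"
    and ker: "\<And>v. v \<in> carrier (free_rmod ?R m) \<Longrightarrow> E v = \<zero>\<^bsub>free_rmod ?R m\<^esub> \<longleftrightarrow> f v = \<zero>\<^bsub>free_rmod ?R n\<^esub>"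
    using rcfm_kernel_summand[OF f] by metis
  have F: "right_module ?R (free_rmod ?R m)" and G: "right_module ?R (free_rmod ?R n)"
    by (rule free_right_module[OF ring_RCFM])+
  interpret f: abelian_group_hom "free_rmod ?R m" "free_rmod ?R n" f
    by (rule rhom_abelian_group_hom[OF F G f])
  have E_hom: "abelian_group_hom (free_rmod ?R m) (free_rmod ?R m) E"
    by (rule rhom_abelian_group_hom[OF F F E])
  show ?thesis
    unfolding proj_dim_le1_def
  proof (rule exI[of _ "free_rmod ?R n"], rule exI[of _ "fixed_submodule (free_rmod ?R m) E"],
      rule exI[of _ f], rule exI[of _ g], intro conjI)
    show "right_module ?R (fixed_submodule (free_rmod ?R m) E)"
      by (rule fixed_submodule_right_module[OF F E])
    show "projective ?R (fixed_submodule (free_rmod ?R m) E) TYPE('b)"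
      by (rule fixed_submodule_projective[OF ring_RCFM E idem])
    show "inj_on f (carrier (fixed_submodule (free_rmod ?R m) E))"
      using f.inj_on_fixed_points[OF E_hom ker] by (simp add: fixed_submodule_simps)
    show "f ` carrier (fixed_submodule (free_rmod ?R m) E) = rkernel (free_rmod ?R n) M g"
      using f.image_fixed_points[OF E_hom idem ker] f_image by (simp add: fixed_submodule_simps)
  qed (use G g f in \<open>simp_all add: free_rmod_projective ring_RCFM rhom_fixed_submodule\<close>)
qed

end
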